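(* For every program $C$ and all quantities $\mu,g\in\mathbb A$, $$\bigoplus_{\tau\in\Sigma}\mathrm{sp}[C](\mu)(\tau)\odot g(\tau)\;=\;\bigoplus_{\sigma\in\Sigma}\mu(\sigma)\odot\mathrm{wp}[C](g)(\sigma).$$
   Context: Semiring. Fix $\mathcal A=\langle U,\oplus,\odot,\mathbb 0,\mathbb 1\rangle$, a possibly partial semiring: $\langle U,\oplus,\mathbb 0\rangle$ is a commutative monoid in which $\oplus$ may be partial, $\langle U,\odot,\mathbb 1\rangle$ is a (total) monoid, $\odot$ distributes over $\oplus$ on both sides, and $\mathbb 0\odot u=u\odot\mathbb 0=\mathbb 0$. The natural order is $u\le v$ iff $u\oplus w=v$ for some $w\in U$. Standing assumptions: $\le$ is a complete partial order; $\mathcal A$ is complete (there is an infinitary sum $\bigoplus_{i\in I}$ that agrees with $\oplus$ on finite index sets, satisfies $v\odot\bigoplus_i u_i=\bigoplus_i v\odot u_i$ and $(\bigoplus_i u_i)\odot v=\bigoplus_i u_i\odot v$ whenever defined, and is invariant under partitioning the index set); $\mathcal A$ is Scott continuous (for every directed $D\subseteq U$ and $y\in U$: $\sup_{x\in D}(x\oplus y)=(\sup D)\oplus y$, $\sup_{x\in D}(x\odot y)=(\sup D)\odot y$, $\sup_{x\in D}(y\odot x)=y\odot\sup D$); and $U$ has a greatest element. States and quantities. $\mathrm{Vars}$ is a finite set of variables, $\Sigma=\{\sigma:\mathrm{Vars}\to\mathbb N\}$, and $\sigma[x\mapsto v]$ is $\sigma$ with $x$ updated to $v$. Each expression $e$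 denotes a function $\llbracket e\rrbracket:\Sigma\to\mathbb N\cup U$. A quantity is a function $f:\Sigma\to U$; $\mathbb A$ is the set of quantities; $\oplus,\odot$ and constants are lifted pointwise. $[\varphi](\sigma)=\mathbb 1$ if $\sigma\models\varphi$ and $\mathbb 0$ otherwise. $f[x/\alpha]$ denotes $\sigma\mapsto f(\sigma[x\mapsto\alpha])$ and $f[x/e]$ denotes $\sigma\mapsto f(\sigma[x\mapsto\llbracket e\rrbracket(\sigma)])$. Programs. $C::= x:=e\mid x:=\ast\mid \mathtt{weight}\ e\mid C;C\mid C+C\mid \mathtt{iter}(C,e,e')$, with denotational semantics $\llbracket C\rrbracket:\Sigma\times\Sigma\to U$: $\llbracket x:=e\rrbracket(\sigma,\tau)=[\sigma[x\mapsto\llbracket e\rrbracket(\sigma)]=\tau]$; $\llbracket x:=\ast\rrbracket(\sigma,\tau)=\bigoplus_{\alpha\in\mathbb N}[\sigma[x\mapsto\alpha]=\tau]$; $\llbracket \mathtt{weight}\ e\rrbracket(\sigma,\tau)=\llbracket e\rrbracket(\sigma)\odot[\sigma=\tau]$; $\llbracket C_1;C_2\rrbracket(\sigma,\tau)=\bigoplus_{\iota\in\Sigma}\llbracket C_1\rrbracket(\sigma,\iota)\odot\llbracket C_2\rrbracket(\iota,\tau)$; $\llbracket C_1+C_2\rrbracket(\sigma,\tau)=\llbracket C_1\rrbracket(\sigma,\tau)\oplus\llbracket C_2\rrbracket(\sigma,\tau)$; $\llbracket\mathtt{iter}(C,e,e')\rrbracket$ is the least fixed point (pointwise natural order) of $\Phi(X)(\sigma,\tau)=\llbracket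 e\rrbracket(\sigma)\odot\big(\bigoplus_{\iota}\llbracket C\rrbracket(\sigma,\iota)\odot X(\iota,\tau)\big)\oplus\llbracket e'\rrbracket(\sigma)\odot[\sigma=\tau]$. Programs are assumed well-formed so that all sums arising are defined. Strongest post $\mathrm{sp}[C]:\mathbb A\to\mathbb A$: $\mathrm{sp}[x:=e](f)=\bigoplus_{\alpha\in\mathbb N}f[x/\alpha]\odot[x=e[x/\alpha]]$ with $[x=e[x/\alpha]](\sigma)=\mathbb 1$ iff $\sigma(x)=\llbracket e\rrbracket(\sigma[x\mapsto\alpha])$; $\mathrm{sp}[x:=\ast](f)=\bigoplus_{\alpha}f[x/\alpha]$; $\mathrm{sp}[\mathtt{weight}\ w](f)=f\odot\llbracket w\rrbracket$; $\mathrm{sp}[C_1;C_2](f)=\mathrm{sp}[C_2](\mathrm{sp}[C_1](f))$; $\mathrm{sp}[C_1+C_2](f)=\mathrm{sp}[C_1](f)\oplus\mathrm{sp}[C_2](f)$; $\mathrm{sp}[\mathtt{iter}(C,e,e')](f)=\big(\mathrm{lfp}\,X.\ f\oplus\mathrm{sp}[C](X\odot\llbracket e\rrbracket)\big)\odot\llbracket e'\rrbracket$. Weakest pre $\mathrm{wp}[C]:\mathbb A\to\mathbb A$: $\mathrm{wp}[x:=e](f)=f[x/e]$; $\mathrm{wp}[x:=\ast](f)=\bigoplus_{\alpha}f[x/\alpha]$; $\mathrm{wp}[\mathtt{weight}\ w](f)=\llbracket w\rrbracket\odot f$; $\mathrm{wp}[C_1;C_2](f)=\mathrm{wp}[C_1](\mathrm{wp}[C_2](f))$;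 $\mathrm{wp}[C_1+C_2](f)=\mathrm{wp}[C_1](f)\oplus\mathrm{wp}[C_2](f)$; $\mathrm{wp}[\mathtt{iter}(C,e,e')](f)=\mathrm{lfp}\,X.\ \llbracket e'\rrbracket\odot f\oplus\llbracket e\rrbracket\odot\mathrm{wp}[C](X)$. Least fixed points are in the pointwise natural order on $\mathbb A$. *)

theory Defs
  imports Main
begin

text \<open>A possibly partial semiring: the addition is partial (value None = undefined),
  multiplication is total.\<close>

record 'u psr =
  padd :: "'u \<Rightarrow> 'u \<Rightarrow> 'u option"
  pmul :: "'u \<Rightarrow> 'u \<Rightarrow> 'u"
  pzero :: 'u
  pone :: 'u

definition nle :: "'u psr \<Rightarrow> 'u \<Rightarrow> 'u \<Rightarrow> bool" where
  "nle A u v \<longleftrightarrow> (\<exists>w. padd A u w = Some v)"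

definition is_lub :: "'u psr \<Rightarrow> 'u set \<Rightarrow> 'u \<Rightarrow> bool" where
  "is_lub A S u \<longleftrightarrow> (\<forall>s\<in>S. nle A s u) \<and> (\<forall>v. (\<forall>s\<in>S. nle A s v) \<longrightarrow> nle A u v)"

definition nsup :: "'u psr \<Rightarrow> 'u set \<Rightarrow> 'u" where
  "nsup A S = (THE u. is_lub A S u)"

definition ndirected :: "'u psr \<Rightarrow> 'u set \<Rightarrow> bool" where
  "ndirected A D \<longleftrightarrow> D \<noteq> {} \<and> (\<forall>x\<in>D. \<forall>y\<in>D. \<exists>z\<in>D. nle A x z \<and> nle A y z)"

inductive fsum_rel :: "'u psr \<Rightarrow> ('i \<Rightarrow> 'u) \<Rightarrow> 'i set \<Rightarrow> 'u \<Rightarrow> bool"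
  for A :: "'u psr" and f :: "'i \<Rightarrow> 'u" where
  fsum_empty: "fsum_rel A f {} (pzero A)"
| fsum_insert: "\<lbrakk>finite F; i \<notin> F; fsum_rel A f F u; padd A (f i) u = Some v\<rbrakk>
                 \<Longrightarrow> fsum_rel A f (insert i F) v"

definition fsum :: "'u psr \<Rightarrow> ('i \<Rightarrow> 'u) \<Rightarrow> 'i set \<Rightarrow> 'u option" where
  "fsum A f F = (if \<exists>u. fsum_rel A f F u then Some (THE u. fsum_rel A f F u) else None)"

definition isum :: "'u psr \<Rightarrow> ('i \<Rightarrow> 'u) \<Rightarrow> 'i set \<Rightarrow> 'u option" where
  "isum A f I =
     (if \<forall>F. finite F \<and> F \<subseteq> I \<longrightarrow> fsum A f F \<noteq> None
      then Some (nsup A {the (fsum A f F) | F. finite F \<and> F \<subseteq> I})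
      else None)"

definition partial_semiring :: "'u psr \<Rightarrow> bool" where
  "partial_semiring A \<longleftrightarrow>
     \<comment> \<open>partial commutative monoid (Kleene equalities)\<close>
     (\<forall>a b. padd A a b = padd A b a) \<and>
     (\<forall>a. padd A a (pzero A) = Some a) \<and>
     (\<forall>a b c. Option.bind (padd A a b) (\<lambda>ab. padd A ab c)
            = Option.bind (padd A b c) (\<lambda>bc. padd A a bc)) \<and>
     \<comment> \<open>total multiplicative monoid\<close>
     (\<forall>a b c. pmul A (pmul A a b) c = pmul A a (pmul A b c)) \<and>
     (\<forall>a. pmul A (pone A) a = a \<and> pmul A a (pone A) = a) \<and>
     \<comment> \<open>distributivity on both sides (whenever the sum is defined)\<close>
     (\<forall>a b c v. padd A a b = Some c \<longrightarrow>
         padd A (pmul A v a) (pmul A v b) = Some (pmul A v c) \<and>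
         padd A (pmul A a v) (pmul A b v) = Some (pmul A c v)) \<and>
     \<comment> \<open>zero annihilates\<close>
     (\<forall>u. pmul A (pzero A) u = pzero A \<and> pmul A u (pzero A) = pzero A) \<and>
     \<comment> \<open>natural order is a complete partial order\<close>
     (\<forall>u v. nle A u v \<and> nle A v u \<longrightarrow> u = v) \<and>
     (\<forall>D. ndirected A D \<longrightarrow> (\<exists>u. is_lub A D u)) \<and>
     \<comment> \<open>Scott continuity\<close>
     (\<forall>D y z. ndirected A D \<longrightarrow>
         (padd A (nsup A D) y = Some z \<longleftrightarrow>
            (\<forall>x\<in>D. padd A x y \<noteq> None) \<and> is_lub A {the (padd A x y) | x. x \<in> D} z)) \<and>
     (\<forall>D y. ndirected A D \<longrightarrow>
         is_lub A {pmul A x y | x. x \<in> D} (pmul A (nsup A D) y) \<and>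
         is_lub A {pmul A y x | x. x \<in> D} (pmul A y (nsup A D))) \<and>
     \<comment> \<open>greatest element\<close>
     (\<exists>t. \<forall>u. nle A u t)"

type_synonym 'v state = "'v \<Rightarrow> nat"
type_synonym ('v, 'u) quant = "'v state \<Rightarrow> 'u"

text \<open>Expressions are given semantically: nat-valued ones (assignments) and
  weight-valued ones (weight statements, iteration).\<close>
datatype ('v, 'u) prog =
    Assign 'v "'v state \<Rightarrow> nat"
  | Havoc 'v
  | Weight "('v, 'u) quant"
  | Seq "('v, 'u) prog" "('v, 'u) prog"
  | Choice "('v, 'u) prog" "('v, 'u) prog"
  | Iter "('v, 'u) prog" "('v, 'u) quant" "('v, 'u) quant"

definition qadd :: "'u psr \<Rightarrow> ('v, 'u) quant \<Rightarrow> ('v, 'u) quant \<Rightarrow> ('v, 'u) quant option" where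
  "qadd A f h = (if \<forall>\<sigma>. padd A (f \<sigma>) (h \<sigma>) \<noteq> None
                 then Some (\<lambda>\<sigma>. the (padd A (f \<sigma>) (h \<sigma>))) else None)"

definition qsum :: "'u psr \<Rightarrow> ('i \<Rightarrow> ('v, 'u) quant) \<Rightarrow> 'i set \<Rightarrow> ('v, 'u) quant option" where
  "qsum A F I = (if \<forall>\<sigma>. isum A (\<lambda>i. F i \<sigma>) I \<noteq> None
                 then Some (\<lambda>\<sigma>. the (isum A (\<lambda>i. F i \<sigma>) I)) else None)"

definition qle :: "'u psr \<Rightarrow> ('v, 'u) quant \<Rightarrow> ('v, 'u) quant \<Rightarrow> bool" where
  "qle A f h \<longleftrightarrow> (\<forall>\<sigma>. nle A (f \<sigma>) (h \<sigma>))"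

definition plfp :: "'u psr \<Rightarrow> (('v, 'u) quant \<Rightarrow> ('v, 'u) quant option) \<Rightarrow> ('v, 'u) quant option" where
  "plfp A \<Phi> = (if \<exists>X. \<Phi> X = Some X \<and> (\<forall>Y. \<Phi> Y = Some Y \<longrightarrow> qle A X Y)
               then Some (THE X. \<Phi> X = Some X \<and> (\<forall>Y. \<Phi> Y = Some Y \<longrightarrow> qle A X Y))
               else None)"

definition iverson :: "'u psr \<Rightarrow> bool \<Rightarrow> 'u" where
  "iverson A b = (if b then pone A else pzero A)"

text \<open>Both transformers are partial: None means that some sum arising is undefined.\<close>

primrec sp :: "'u psr \<Rightarrow> ('v, 'u) prog \<Rightarrow> ('v, 'u) quant \<Rightarrow> ('v, 'u) quant option" where
  "sp A (Assign x e) f =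
     qsum A (\<lambda>\<alpha> \<sigma>. pmul A (f (\<sigma>(x := \<alpha>))) (iverson A (\<sigma> x = e (\<sigma>(x := \<alpha>))))) UNIV"
| "sp A (Havoc x) f = qsum A (\<lambda>\<alpha> \<sigma>. f (\<sigma>(x := \<alpha>))) (UNIV :: nat set)"
| "sp A (Weight w) f = Some (\<lambda>\<sigma>. pmul A (f \<sigma>) (w \<sigma>))"
| "sp A (Seq C1 C2) f = Option.bind (sp A C1 f) (sp A C2)"
| "sp A (Choice C1 C2) f =
     Option.bind (sp A C1 f) (\<lambda>a. Option.bind (sp A C2 f) (\<lambda>b. qadd A a b))"
| "sp A (Iter C e e') f =
     Option.bind
       (plfp A (\<lambda>X. Option.bind (sp A C (\<lambda>\<sigma>. pmul A (X \<sigma>) (e \<sigma>))) (\<lambda>Y. qadd A f Y)))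
       (\<lambda>L. Some (\<lambda>\<sigma>. pmul A (L \<sigma>) (e' \<sigma>)))"

primrec wp :: "'u psr \<Rightarrow> ('v, 'u) prog \<Rightarrow> ('v, 'u) quant \<Rightarrow> ('v, 'u) quant option" where
  "wp A (Assign x e) f = Some (\<lambda>\<sigma>. f (\<sigma>(x := e \<sigma>)))"
| "wp A (Havoc x) f = qsum A (\<lambda>\<alpha> \<sigma>. f (\<sigma>(x := \<alpha>))) (UNIV :: nat set)"
| "wp A (Weight w) f = Some (\<lambda>\<sigma>. pmul A (w \<sigma>) (f \<sigma>))"
| "wp A (Seq C1 C2) f = Option.bind (wp A C2 f) (wp A C1)"
| "wp A (Choice C1 C2) f =
     Option.bind (wp A C1 f) (\<lambda>a. Option.bind (wp A C2 f) (\<lambda>b. qadd A a b))"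
| "wp A (Iter C e e') f =
     plfp A (\<lambda>X. Option.bind (wp A C X)
                  (\<lambda>Y. qadd A (\<lambda>\<sigma>. pmul A (e' \<sigma>) (f \<sigma>)) (\<lambda>\<sigma>. pmul A (e \<sigma>) (Y \<sigma>))))"

end

theory Submission
  imports Defs
begin

text \<open>Both transformers are sums over runs. A run of a program is encoded by a trace that
  records its nondeterministic choices; executing it from \<open>\<sigma>\<close> yields a final state and a
  weight. By induction on the program, \<open>sp[C](\<mu>)(\<tau>)\<close> is the sum of \<open>\<mu>(\<sigma>) \<odot> weight\<close> over
  all runs from some \<open>\<sigma>\<close> to \<open>\<tau>\<close>, and \<open>wp[C](g)(\<sigma>)\<close> the sum of \<open>weight \<odot> g(end)\<close> over all
  runs from \<open>\<sigma>\<close>. For loops, the least fixed point is the limit of its Kleene chain, whose n-th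
  element is the sum over runs with fewer than n iterations. Since sums are partial, the
  induction also carries the fact that both transformers are monotone and stay defined below
  a point where they are defined. Both sides of the duality are then the sum of
  \<open>\<mu>(\<sigma>) \<odot> weight \<odot> g(end)\<close> over all runs, grouped once by final and once by initial state;
  Fubini's theorem for partial sums only requires the inner sums to exist.\<close>

text \<open>The axioms are stated in the shape of the conjuncts of \<open>partial_semiring\<close>, so that
  interpreting the locale is purely propositional.\<close>

locale cpo_semiring =
  fixes A :: "'u psr"
  assumes padd_commute: "padd A a b = padd A b a"
    and padd_0_right [simp]: "padd A a (pzero A) = Some a"
    and padd_assoc: "Option.bind (padd A a b) (\<lambda>ab. padd A ab c)
                     = Option.bind (padd A b c) (\<lambda>bc. padd A a bc)"
    and pmul_assoc: "pmul A (pmul A a b) c = pmul A a (pmul A b c)"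
    and pmul_1: "pmul A (pone A) a = a \<and> pmul A a (pone A) = a"
    and padd_distrib: "padd A a b = Some c \<Longrightarrow>
          padd A (pmul A v a) (pmul A v b) = Some (pmul A v c) \<and>
          padd A (pmul A a v) (pmul A b v) = Some (pmul A c v)"
    and pmul_0: "pmul A (pzero A) u = pzero A \<and> pmul A u (pzero A) = pzero A"
    and nle_antisym': "nle A u v \<and> nle A v u \<longrightarrow> u = v"
    and directed_has_lub: "ndirected A D \<Longrightarrow> \<exists>u. is_lub A D u"
    and padd_nsup_iff: "ndirected A D \<Longrightarrow>
          padd A (nsup A D) y = Some z \<longleftrightarrow>
            (\<forall>x\<in>D. padd A x y \<noteq> None) \<and> is_lub A {the (padd A x y) | x. x \<in> D} z"
    and pmul_nsup: "ndirected A D \<Longrightarrow>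
          is_lub A {pmul A x y | x. x \<in> D} (pmul A (nsup A D) y) \<and>
          is_lub A {pmul A y x | x. x \<in> D} (pmul A y (nsup A D))"

lemma cpo_semiring_if_partial_semiring: "partial_semiring A \<Longrightarrow> cpo_semiring A"
  unfolding partial_semiring_def cpo_semiring_def by (elim conjE) (intro conjI; assumption)

context cpo_semiring
begin

lemma padd_0_left [simp]: "padd A (pzero A) a = Some a"
  using padd_0_right padd_commute by metis

lemma padd_assoc_right:
  "padd A a b = Some x \<Longrightarrow> padd A x c = Some y \<Longrightarrow> \<exists>z. padd A b c = Some z \<and> padd A a z = Some y"
  using padd_assoc[of a b c] by (cases "padd A b c") auto

lemma padd_assoc_left:
  "padd A b c = Some z \<Longrightarrow> padd A a z = Some y \<Longrightarrow> \<exists>x. padd A a b = Some x \<and> padd A x c = Some y"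
  using padd_assoc[of a b c] by (cases "padd A a b") auto

lemma pmul_1_left [simp]: "pmul A (pone A) a = a"
  and pmul_1_right [simp]: "pmul A a (pone A) = a"
  and pmul_0_left [simp]: "pmul A (pzero A) a = pzero A"
  and pmul_0_right [simp]: "pmul A a (pzero A) = pzero A"
  using pmul_1 pmul_0 by auto

lemma padd_distrib_left: "padd A a b = Some c \<Longrightarrow> padd A (pmul A v a) (pmul A v b) = Some (pmul A v c)"
  and padd_distrib_right: "padd A a b = Some c \<Longrightarrow> padd A (pmul A a v) (pmul A b v) = Some (pmul A c v)"
  using padd_distrib by auto

lemma nle_antisym: "nle A u v \<Longrightarrow> nle A v u \<Longrightarrow> u = v"
  using nle_antisym' by blast

lemma pmul_nsup_left: "ndirected A D \<Longrightarrow> is_lub A {pmul A x y | x. x \<in> D} (pmul A (nsup A D) y)"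
  and pmul_nsup_right: "ndirected A D \<Longrightarrow> is_lub A {pmul A y x | x. x \<in> D} (pmul A y (nsup A D))"
  using pmul_nsup by auto

lemma nle_refl [simp]: "nle A a a"
  unfolding nle_def using padd_0_right by blast

lemma nle_trans: "nle A a b \<Longrightarrow> nle A b c \<Longrightarrow> nle A a c"
  unfolding nle_def by (metis padd_assoc_right)

lemma nle_0 [simp]: "nle A (pzero A) a"
  unfolding nle_def by auto

lemma nle_padd: "padd A a b = Some c \<Longrightarrow> nle A a c"
  unfolding nle_def by blast

lemma padd_mono_left:
  assumes "nle A a a'" "padd A a' b = Some c'"
  shows "\<exists>c. padd A a b = Some c \<and> nle A c c'"
proof -
  obtain w where w: "padd A a w = Some a'"
    using assms(1) unfolding nle_def by blast
  obtain z where z: "padd A w b = Some z" "padd A a z = Some c'"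
    using padd_assoc_right[OF w assms(2)] by blast
  from padd_assoc_left[OF z(1)[unfolded padd_commute[of w]] z(2)]
  obtain x where "padd A a b = Some x" "padd A x w = Some c'"
    by blast
  then show ?thesis
    unfolding nle_def by blast
qed

lemma padd_mono:
  assumes "nle A a a'" "nle A b b'" "padd A a' b' = Some c'"
  shows "\<exists>c. padd A a b = Some c \<and> nle A c c'"
proof -
  obtain c1 where c1: "padd A b' a = Some c1" "nle A c1 c'"
    using padd_mono_left[OF assms(1,3)] padd_commute by metis
  obtain c where "padd A b a = Some c" "nle A c c1"
    using padd_mono_left[OF assms(2) c1(1)] by blast
  then show ?thesis
    using c1(2) nle_trans padd_commute by metis
qed

lemma pmul_left_mono: "nle A a b \<Longrightarrow> nle A (pmul A c a) (pmul A c b)"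
  unfolding nle_def using padd_distrib_left by blast

lemma pmul_right_mono: "nle A a b \<Longrightarrow> nle A (pmul A a c) (pmul A b c)"
  unfolding nle_def using padd_distrib_right by blast

lemma is_lub_unique: "is_lub A S u \<Longrightarrow> is_lub A S v \<Longrightarrow> u = v"
  unfolding is_lub_def using nle_antisym by blast

lemma nsup_eqI: "is_lub A S u \<Longrightarrow> nsup A S = u"
  unfolding nsup_def using is_lub_unique by blast

lemma nsup_is_lub: "ndirected A D \<Longrightarrow> is_lub A D (nsup A D)"
  using directed_has_lub nsup_eqI by metis

lemma padd_nsup_le:
  assumes D: "ndirected A D" and bound: "\<forall>x\<in>D. \<exists>c. padd A x y = Some c \<and> nle A c v"
  shows "\<exists>z. padd A (nsup A D) y = Some z \<and> nle A z v"
proof -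
  let ?S = "{the (padd A x y) | x. x \<in> D}"
  have "ndirected A ?S"
    unfolding ndirected_def
  proof safe
    show "?S = {} \<Longrightarrow> False"
      using D unfolding ndirected_def by blast
  next
    fix x1 x2 assume "x1 \<in> D" "x2 \<in> D"
    then obtain z where z: "z \<in> D" "nle A x1 z" "nle A x2 z"
      using D unfolding ndirected_def by blast
    obtain cz where cz: "padd A z y = Some cz"
      using bound z by blast
    obtain c1 c2 where "padd A x1 y = Some c1" "nle A c1 cz" "padd A x2 y = Some c2" "nle A c2 cz"
      using padd_mono_left[OF z(2) cz] padd_mono_left[OF z(3) cz] by blast
    then show "\<exists>w\<in>?S. nle A (the (padd A x1 y)) w \<and> nle A (the (padd A x2 y)) w"
      using z cz by force
  qed
  then obtain z where z: "is_lub A ?S z"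
    using directed_has_lub by blast
  then have "padd A (nsup A D) y = Some z"
    using padd_nsup_iff[OF D] bound by auto
  moreover have "nle A z v"
    using z bound unfolding is_lub_def by force
  ultimately show ?thesis
    by blast
qed

section \<open>Finite and infinite sums\<close>

lemma fsum_rel_finite: "fsum_rel A f F u \<Longrightarrow> finite F"
  by (induction rule: fsum_rel.induct) auto

lemma fsum_rel_remove:
  "fsum_rel A f G v \<Longrightarrow> i \<in> G \<Longrightarrow> \<exists>u. fsum_rel A f (G - {i}) u \<and> padd A (f i) u = Some v"
proof (induction arbitrary: i rule: fsum_rel.induct)
  case fsum_empty
  then show ?case by simp
next
  case (fsum_insert F j u v)
  show ?case
  proof (cases "i = j")
    case True
    then show ?thesis
      using fsum_insert by (auto simp: insert_Diff_if)
  next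
    case False
    then have "i \<in> F"
      using fsum_insert by auto
    from fsum_insert.IH[OF this] obtain u' where
      u': "fsum_rel A f (F - {i}) u'" "padd A (f i) u' = Some u"
      by blast
    from padd_assoc_right[OF u'(2) fsum_insert(4)[unfolded padd_commute[of "f j"]]]
    obtain x where x: "padd A (f j) u' = Some x" "padd A (f i) x = Some v"
      using padd_commute by metis
    have "fsum_rel A f (insert j (F - {i})) x"
      using fsum_insert u' x by (intro fsum_rel.fsum_insert) auto
    moreover have "insert j (F - {i}) = insert j F - {i}"
      using False by auto
    ultimately show ?thesis
      using x by auto
  qed
qed

lemma fsum_rel_unique: "fsum_rel A f F u \<Longrightarrow> fsum_rel A f F v \<Longrightarrow> u = v"
proof (induction arbitrary: v rule: fsum_rel.induct)
  case fsum_empty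
  then show ?case by (cases rule: fsum_rel.cases) simp_all
next
  case (fsum_insert F i u v' v)
  have "insert i F - {i} = F"
    using fsum_insert(2) by blast
  with fsum_rel_remove[OF fsum_insert.prems insertI1] obtain u' where
    "fsum_rel A f F u'" "padd A (f i) u' = Some v"
    by auto
  then show ?case
    using fsum_insert.IH fsum_insert(4) by fastforce
qed

lemma fsum_eq_Some_iff: "fsum A f F = Some u \<longleftrightarrow> fsum_rel A f F u"
proof -
  have "(THE u. fsum_rel A f F u) = v" if "fsum_rel A f F v" for v
    using that fsum_rel_unique by (blast intro: the_equality)
  then show ?thesis
    unfolding fsum_def by auto
qed

lemma fsum_empty [simp]: "fsum A f {} = Some (pzero A)"
  by (simp add: fsum_eq_Some_iff fsum_rel.fsum_empty)

lemma fsum_infinite: "infinite F \<Longrightarrow> fsum A f F = None"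
  unfolding fsum_def using fsum_rel_finite by auto

lemma fsum_insert:
  assumes "finite F" "i \<notin> F"
  shows "fsum A f (insert i F) = Option.bind (fsum A f F) (padd A (f i))"
proof (cases "fsum A f (insert i F)")
  case None
  show ?thesis
  proof (cases "fsum A f F")
    case (Some u)
    have "padd A (f i) u = None"
    proof (rule ccontr)
      assume "padd A (f i) u \<noteq> None"
      then obtain v where "padd A (f i) u = Some v"
        by blast
      then have "fsum A f (insert i F) = Some v"
        using Some assms by (simp add: fsum_eq_Some_iff fsum_rel.fsum_insert)
      then show False
        using None by simp
    qed
    then show ?thesis
      using None Some by simp
  qed (use None in simp)
next
  case (Some v)
  have "insert i F - {i} = F"
    using assms(2) by blast
  with fsum_rel_remove[OF Some[unfolded fsum_eq_Some_iff] insertI1] obtain u where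
    "fsum A f F = Some u" "padd A (f i) u = Some v"
    by (auto simp: fsum_eq_Some_iff)
  then show ?thesis
    using Some by simp
qed

lemma fsum_singleton [simp]: "fsum A f {i} = Some (f i)"
  using fsum_insert[of "{}" i f] by simp

lemma fsum_cong: "(\<And>i. i \<in> F \<Longrightarrow> f i = g i) \<Longrightarrow> fsum A f F = fsum A g F"
  by (induction F rule: infinite_finite_induct) (simp_all add: fsum_infinite fsum_insert)

lemma fsum_reindex: "inj_on h F \<Longrightarrow> fsum A f (h ` F) = fsum A (\<lambda>i. f (h i)) F"
proof (induction F rule: infinite_finite_induct)
  case (infinite F)
  then have "infinite (h ` F)"
    using finite_imageD by blast
  then show ?case
    using infinite by (simp add: fsum_infinite)
next
  case (insert i F)
  then have "h i \<notin> h ` F"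
    by auto
  then show ?case
    using insert fsum_insert[OF insert.hyps] fsum_insert[of "h ` F" "h i" f] by simp
qed simp

lemma fsum_union:
  assumes "finite F" "finite G" "F \<inter> G = {}"
  shows "fsum A f (F \<union> G) = Option.bind (fsum A f F) (\<lambda>a. Option.bind (fsum A f G) (padd A a))"
  using assms
proof (induction F rule: finite_induct)
  case empty
  then show ?case by (cases "fsum A f G") simp_all
next
  case (insert i F)
  have "insert i F \<union> G = insert i (F \<union> G)" "i \<notin> F \<union> G" "finite (F \<union> G)"
    using insert by auto
  then show ?case
    using insert padd_assoc[of "f i"] fsum_insert[OF insert.hyps]
    by (cases "fsum A f F"; cases "fsum A f G") (simp_all add: fsum_insert)
qed

lemma fsum_mono:
  assumes "finite F" "\<forall>i\<in>F. nle A (f i) (g i)" "fsum A g F = Some v"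
  shows "\<exists>u. fsum A f F = Some u \<and> nle A u v"
  using assms
proof (induction F arbitrary: v rule: finite_induct)
  case (insert i F)
  from insert.prems(2) obtain v0 where v0: "fsum A g F = Some v0" "padd A (g i) v0 = Some v"
    using fsum_insert[OF insert.hyps] by (cases "fsum A g F") auto
  from insert.IH[OF _ v0(1)] insert.prems(1) obtain u0 where
    u0: "fsum A f F = Some u0" "nle A u0 v0"
    by blast
  from padd_mono[OF _ u0(2) v0(2)] insert.prems(1) obtain c where
    "padd A (f i) u0 = Some c" "nle A c v"
    by auto
  then show ?case
    using fsum_insert[OF insert.hyps] u0 by simp
qed simp

lemma fsum_subset_le:
  assumes "finite G" "F \<subseteq> G" "fsum A f G = Some v"
  shows "\<exists>u. fsum A f F = Some u \<and> nle A u v"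
proof -
  have "G = F \<union> (G - F)" "finite F"
    using assms finite_subset by auto
  then have "Option.bind (fsum A f F) (\<lambda>a. Option.bind (fsum A f (G - F)) (padd A a)) = Some v"
    using fsum_union[of F "G - F" f] assms by simp
  then show ?thesis
    by (cases "fsum A f F"; cases "fsum A f (G - F)") (auto intro: nle_padd)
qed

lemma fsum_zeros: "finite G \<Longrightarrow> \<forall>i\<in>G. f i = pzero A \<Longrightarrow> fsum A f G = Some (pzero A)"
proof (induction G rule: finite_induct)
  case (insert i F)
  then show ?case
    using fsum_insert[OF insert.hyps] by simp
qed simp

lemma fsum_zero_extend:
  assumes "finite G" "F \<subseteq> G" "\<forall>i\<in>G - F. f i = pzero A"
  shows "fsum A f G = fsum A f F"
proof -
  have "G = F \<union> (G - F)" "finite F"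
    using assms finite_subset by auto
  then show ?thesis
    using fsum_union[of F "G - F" f] fsum_zeros[of "G - F" f] assms
    by (cases "fsum A f F") auto
qed

definition partial_sums :: "('i \<Rightarrow> 'u) \<Rightarrow> 'i set \<Rightarrow> 'u set" where
  "partial_sums f I = {the (fsum A f F) | F. finite F \<and> F \<subseteq> I}"

lemma partial_sums_directed:
  assumes "\<forall>F. finite F \<and> F \<subseteq> I \<longrightarrow> fsum A f F \<noteq> None"
  shows "ndirected A (partial_sums f I)"
  unfolding ndirected_def
proof safe
  assume "partial_sums f I = {}"
  then show False
    unfolding partial_sums_def by blast
next
  fix x y assume "x \<in> partial_sums f I" "y \<in> partial_sums f I"
  then obtain F G where FG: "finite F" "F \<subseteq> I" "x = the (fsum A f F)"
    "finite G" "G \<subseteq> I" "y = the (fsum A f G)"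
    unfolding partial_sums_def by blast
  obtain v where v: "fsum A f (F \<union> G) = Some v"
    using assms FG by auto
  have "finite (F \<union> G)"
    using FG by auto
  then obtain x' y' where "fsum A f F = Some x'" "nle A x' v" "fsum A f G = Some y'" "nle A y' v"
    using fsum_subset_le[OF _ _ v, of F] fsum_subset_le[OF _ _ v, of G] by auto
  moreover have "v \<in> partial_sums f I"
    unfolding partial_sums_def using FG v by (auto intro!: exI[of _ "F \<union> G"])
  ultimately show "\<exists>z\<in>partial_sums f I. nle A x z \<and> nle A y z"
    using FG by auto
qed

lemma isum_eq_Some_iff:
  "isum A f I = Some u \<longleftrightarrow>
     (\<forall>F. finite F \<and> F \<subseteq> I \<longrightarrow> fsum A f F \<noteq> None) \<and> u = nsup A (partial_sums f I)"
  unfolding isum_def partial_sums_def by auto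

lemma isum_is_lub: "isum A f I = Some u \<Longrightarrow> is_lub A (partial_sums f I) u"
  using isum_eq_Some_iff partial_sums_directed nsup_is_lub by metis

lemma isum_fsum_le:
  assumes "isum A f I = Some u" "finite F" "F \<subseteq> I"
  shows "\<exists>x. fsum A f F = Some x \<and> nle A x u"
proof -
  obtain x where x: "fsum A f F = Some x"
    using assms isum_eq_Some_iff by blast
  then have "x \<in> partial_sums f I"
    unfolding partial_sums_def using assms by force
  then show ?thesis
    using isum_is_lub[OF assms(1)] x unfolding is_lub_def by blast
qed

lemma isum_le:
  assumes "isum A f I = Some u"
    and "\<And>F x. finite F \<Longrightarrow> F \<subseteq> I \<Longrightarrow> fsum A f F = Some x \<Longrightarrow> nle A x v"
  shows "nle A u v"
proof -
  have "\<forall>s\<in>partial_sums f I. nle A s v"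
  proof
    fix s assume "s \<in> partial_sums f I"
    then obtain F where F: "finite F" "F \<subseteq> I" "s = the (fsum A f F)"
      unfolding partial_sums_def by blast
    moreover obtain x where "fsum A f F = Some x"
      using assms(1) F isum_eq_Some_iff by blast
    ultimately show "nle A s v"
      using assms(2) by auto
  qed
  then show ?thesis
    using isum_is_lub[OF assms(1)] unfolding is_lub_def by blast
qed

lemma isum_exists_le:
  assumes "\<And>F. finite F \<Longrightarrow> F \<subseteq> I \<Longrightarrow> \<exists>x. fsum A f F = Some x \<and> nle A x v"
  shows "\<exists>u. isum A f I = Some u \<and> nle A u v"
proof -
  have "\<forall>F. finite F \<and> F \<subseteq> I \<longrightarrow> fsum A f F \<noteq> None"
    using assms by fastforce
  then have s: "isum A f I = Some (nsup A (partial_sums f I))"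
    using isum_eq_Some_iff by blast
  have "nle A (nsup A (partial_sums f I)) v"
    using isum_le[OF s] assms by fastforce
  then show ?thesis
    using s by blast
qed

lemma isum_dominated:
  assumes "\<And>F. finite F \<Longrightarrow> F \<subseteq> I \<Longrightarrow> \<exists>G. finite G \<and> G \<subseteq> J \<and>
             (\<forall>y. fsum A g G = Some y \<longrightarrow> (\<exists>x. fsum A f F = Some x \<and> nle A x y))"
    and "isum A g J = Some v"
  shows "\<exists>u. isum A f I = Some u \<and> nle A u v"
proof (rule isum_exists_le)
  fix F assume F: "finite F" "F \<subseteq> I"
  from assms(1)[OF F] obtain G where G: "finite G" "G \<subseteq> J"
    "\<forall>y. fsum A g G = Some y \<longrightarrow> (\<exists>x. fsum A f F = Some x \<and> nle A x y)"
    by blast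
  obtain y where "fsum A g G = Some y" "nle A y v"
    using isum_fsum_le[OF assms(2) G(1,2)] by blast
  then show "\<exists>x. fsum A f F = Some x \<and> nle A x v"
    using G(3) nle_trans by blast
qed

lemma isum_eq_if_dominated:
  assumes "\<And>F. finite F \<Longrightarrow> F \<subseteq> I \<Longrightarrow> \<exists>G. finite G \<and> G \<subseteq> J \<and>
             (\<forall>y. fsum A g G = Some y \<longrightarrow> (\<exists>x. fsum A f F = Some x \<and> nle A x y))"
    and "\<And>G. finite G \<Longrightarrow> G \<subseteq> J \<Longrightarrow> \<exists>F. finite F \<and> F \<subseteq> I \<and>
             (\<forall>y. fsum A f F = Some y \<longrightarrow> (\<exists>x. fsum A g G = Some x \<and> nle A x y))"
  shows "isum A f I = isum A g J"
proof (cases "isum A g J")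
  case None
  then show ?thesis
    using isum_dominated[OF assms(2)] by (cases "isum A f I") fastforce+
next
  case (Some v)
  then obtain u where u: "isum A f I = Some u" "nle A u v"
    using isum_dominated[OF assms(1)] by blast
  obtain v' where "isum A g J = Some v'" "nle A v' u"
    using isum_dominated[OF assms(2) u(1)] by blast
  then show ?thesis
    using Some u nle_antisym by simp
qed

lemma isum_subset_le:
  assumes "I \<subseteq> J" "isum A f J = Some v"
  shows "\<exists>u. isum A f I = Some u \<and> nle A u v"
proof (rule isum_dominated[OF _ assms(2)])
  fix F assume "finite F" "F \<subseteq> I"
  then show "\<exists>G. finite G \<and> G \<subseteq> J \<and> (\<forall>y. fsum A f G = Some y \<longrightarrow> (\<exists>x. fsum A f F = Some x \<and> nle A x y))"
    using assms(1) by (intro exI[of _ F]) auto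
qed

lemma isum_mono:
  assumes "\<forall>i\<in>I. nle A (f i) (g i)" "isum A g I = Some v"
  shows "\<exists>u. isum A f I = Some u \<and> nle A u v"
proof (rule isum_dominated[OF _ assms(2)])
  fix F assume F: "finite F" "F \<subseteq> I"
  then show "\<exists>G. finite G \<and> G \<subseteq> I \<and> (\<forall>y. fsum A g G = Some y \<longrightarrow> (\<exists>x. fsum A f F = Some x \<and> nle A x y))"
    using fsum_mono[OF F(1)] assms(1) by (intro exI[of _ F]) blast
qed

lemma isum_cong:
  assumes "\<And>i. i \<in> I \<Longrightarrow> f i = g i"
  shows "isum A f I = isum A g I"
proof -
  have fsum_eq: "\<And>F. F \<subseteq> I \<Longrightarrow> fsum A f F = fsum A g F"
    using assms by (intro fsum_cong) auto
  show ?thesis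
  proof (rule isum_eq_if_dominated)
    fix F assume F: "finite F" "F \<subseteq> I"
    show "\<exists>G. finite G \<and> G \<subseteq> I \<and> (\<forall>y. fsum A g G = Some y \<longrightarrow> (\<exists>x. fsum A f F = Some x \<and> nle A x y))"
      by (intro exI[of _ F] conjI allI impI) (use F fsum_eq[OF F(2)] in auto)
  next
    fix F assume F: "finite F" "F \<subseteq> I"
    show "\<exists>G. finite G \<and> G \<subseteq> I \<and> (\<forall>y. fsum A f G = Some y \<longrightarrow> (\<exists>x. fsum A g F = Some x \<and> nle A x y))"
      by (intro exI[of _ F] conjI allI impI) (use F fsum_eq[OF F(2)] in auto)
  qed
qed

lemma isum_reindex:
  assumes "bij_betw h I J"
  shows "isum A (\<lambda>i. f (h i)) I = isum A f J"
proof (rule isum_eq_if_dominated)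
  fix F assume F: "finite F" "F \<subseteq> I"
  have "inj_on h I"
    using assms bij_betw_def by blast
  then have "inj_on h F"
    using F inj_on_subset by blast
  then have "fsum A f (h ` F) = fsum A (\<lambda>i. f (h i)) F"
    by (rule fsum_reindex)
  moreover have "h ` F \<subseteq> J"
    using assms F bij_betwE by blast
  ultimately show "\<exists>G. finite G \<and> G \<subseteq> J \<and>
      (\<forall>y. fsum A f G = Some y \<longrightarrow> (\<exists>x. fsum A (\<lambda>i. f (h i)) F = Some x \<and> nle A x y))"
    using F by (intro exI[of _ "h ` F"]) auto
next
  fix G assume G: "finite G" "G \<subseteq> J"
  let ?F = "{i\<in>I. h i \<in> G}"
  have hF: "h ` ?F = G"
    using assms G unfolding bij_betw_def by auto
  have "inj_on h I"
    using assms bij_betw_def by blast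
  then have inj: "inj_on h ?F"
    by (rule inj_on_subset) auto
  have "finite (h ` ?F)"
    using hF G by simp
  then have fin: "finite ?F"
    using finite_imageD inj by blast
  have "fsum A f (h ` ?F) = fsum A (\<lambda>i. f (h i)) ?F"
    using inj by (rule fsum_reindex)
  then show "\<exists>F. finite F \<and> F \<subseteq> I \<and>
      (\<forall>y. fsum A (\<lambda>i. f (h i)) F = Some y \<longrightarrow> (\<exists>x. fsum A f G = Some x \<and> nle A x y))"
    using fin hF by (intro exI[of _ ?F]) auto
qed

lemma isum_reindex_cong:
  assumes "bij_betw h I J" "\<And>i. i \<in> I \<Longrightarrow> f i = g (h i)"
  shows "isum A f I = isum A g J"
  using isum_reindex[OF assms(1), of g] isum_cong[of I f "\<lambda>i. g (h i)"] assms(2) by simp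

lemma isum_zero_extend:
  assumes "I \<subseteq> J" "\<forall>i\<in>J - I. f i = pzero A"
  shows "isum A f I = isum A f J"
proof (rule isum_eq_if_dominated)
  fix F assume "finite F" "F \<subseteq> I"
  then show "\<exists>G. finite G \<and> G \<subseteq> J \<and> (\<forall>y. fsum A f G = Some y \<longrightarrow> (\<exists>x. fsum A f F = Some x \<and> nle A x y))"
    using assms by (intro exI[of _ F]) auto
next
  fix G assume G: "finite G" "G \<subseteq> J"
  then have "fsum A f G = fsum A f (G \<inter> I)"
    using fsum_zero_extend[of G "G \<inter> I" f] assms(2) by blast
  then show "\<exists>F. finite F \<and> F \<subseteq> I \<and> (\<forall>y. fsum A f F = Some y \<longrightarrow> (\<exists>x. fsum A f G = Some x \<and> nle A x y))"
    using G by (intro exI[of _ "G \<inter> I"]) auto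
qed

lemma isum_finite: assumes "finite I" shows "isum A f I = fsum A f I"
proof (cases "fsum A f I")
  case None
  then show ?thesis
    unfolding isum_def using assms by auto
next
  case (Some v)
  obtain u where u: "isum A f I = Some u" "nle A u v"
    using isum_exists_le[of I f v] fsum_subset_le[OF assms _ Some] by blast
  obtain x where "fsum A f I = Some x" "nle A x u"
    using isum_fsum_le[OF u(1) assms] by blast
  then show ?thesis
    using u Some nle_antisym by simp
qed

lemma isum_singleton [simp]: "isum A f {i} = Some (f i)"
  by (simp add: isum_finite)

lemma isum_empty [simp]: "isum A f {} = Some (pzero A)"
  by (simp add: isum_finite)

definition cont_additive :: "('u \<Rightarrow> 'u) \<Rightarrow> bool" where
  "cont_additive \<phi> \<longleftrightarrow>
     \<phi> (pzero A) = pzero A \<and>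
     (\<forall>a b c. padd A a b = Some c \<longrightarrow> padd A (\<phi> a) (\<phi> b) = Some (\<phi> c)) \<and>
     (\<forall>D. ndirected A D \<longrightarrow> is_lub A (\<phi> ` D) (\<phi> (nsup A D)))"

lemma cont_additive_pmul_left: "cont_additive (pmul A c)"
  unfolding cont_additive_def
  using padd_distrib_left pmul_nsup_right by (simp add: Setcompr_eq_image)

lemma cont_additive_pmul_right: "cont_additive (\<lambda>x. pmul A x c)"
  unfolding cont_additive_def
  using padd_distrib_right pmul_nsup_left by (simp add: Setcompr_eq_image)

lemma cont_additive_mono: "cont_additive \<phi> \<Longrightarrow> nle A a b \<Longrightarrow> nle A (\<phi> a) (\<phi> b)"
  unfolding cont_additive_def nle_def by blast

lemma fsum_cont_additive:
  assumes "cont_additive \<phi>" "fsum A f F = Some u"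
  shows "fsum A (\<lambda>i. \<phi> (f i)) F = Some (\<phi> u)"
  using assms(2)
proof (induction F arbitrary: u rule: infinite_finite_induct)
  case (infinite F)
  then show ?case by (simp add: fsum_infinite)
next
  case empty
  then show ?case
    using assms(1) unfolding cont_additive_def by simp
next
  case (insert i F)
  from insert.prems obtain u0 where u0: "fsum A f F = Some u0" "padd A (f i) u0 = Some u"
    using fsum_insert[OF insert.hyps] by (cases "fsum A f F") auto
  then show ?case
    using insert.IH[OF u0(1)] assms(1) fsum_insert[OF insert.hyps] unfolding cont_additive_def by simp
qed

lemma isum_cont_additive:
  assumes \<phi>: "cont_additive \<phi>" and u: "isum A f I = Some u"
  shows "isum A (\<lambda>i. \<phi> (f i)) I = Some (\<phi> u)"
proof -
  have "\<exists>u'. isum A (\<lambda>i. \<phi> (f i)) I = Some u' \<and> nle A u' (\<phi> u)"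
  proof (rule isum_exists_le)
    fix F assume "finite F" "F \<subseteq> I"
    then obtain x where "fsum A f F = Some x" "nle A x u"
      using isum_fsum_le[OF u] by blast
    then show "\<exists>x. fsum A (\<lambda>i. \<phi> (f i)) F = Some x \<and> nle A x (\<phi> u)"
      using fsum_cont_additive[OF \<phi>] cont_additive_mono[OF \<phi>] by blast
  qed
  then obtain u' where u': "isum A (\<lambda>i. \<phi> (f i)) I = Some u'" "nle A u' (\<phi> u)"
    by blast
  have "ndirected A (partial_sums f I)"
    using u isum_eq_Some_iff partial_sums_directed by metis
  moreover have "u = nsup A (partial_sums f I)"
    using u isum_eq_Some_iff by blast
  ultimately have lub: "is_lub A (\<phi> ` partial_sums f I) (\<phi> u)"
    using \<phi> unfolding cont_additive_def by blast
  have "\<forall>s\<in>\<phi> ` partial_sums f I. nle A s u'"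
  proof
    fix s assume "s \<in> \<phi> ` partial_sums f I"
    then obtain F where F: "finite F" "F \<subseteq> I" "s = \<phi> (the (fsum A f F))"
      unfolding partial_sums_def by blast
    moreover obtain x where "fsum A f F = Some x"
      using u F isum_eq_Some_iff by blast
    ultimately show "nle A s u'"
      using isum_fsum_le[OF u'(1) F(1,2)] fsum_cont_additive[OF \<phi>] by fastforce
  qed
  then have "nle A (\<phi> u) u'"
    using lub unfolding is_lub_def by blast
  then show ?thesis
    using u' nle_antisym by simp
qed

lemma isum_pmul_left: "isum A f I = Some u \<Longrightarrow> isum A (\<lambda>i. pmul A c (f i)) I = Some (pmul A c u)"
  using isum_cont_additive[OF cont_additive_pmul_left] .

lemma isum_pmul_right: "isum A f I = Some u \<Longrightarrow> isum A (\<lambda>i. pmul A (f i) c) I = Some (pmul A u c)"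
  using isum_cont_additive[OF cont_additive_pmul_right] .

lemma padd_isum_le:
  assumes a: "isum A f I = Some a" and b: "isum A g J = Some b"
    and bound: "\<And>F G x y. finite F \<Longrightarrow> F \<subseteq> I \<Longrightarrow> finite G \<Longrightarrow> G \<subseteq> J \<Longrightarrow>
       fsum A f F = Some x \<Longrightarrow> fsum A g G = Some y \<Longrightarrow> \<exists>c. padd A x y = Some c \<and> nle A c v"
  shows "\<exists>c. padd A a b = Some c \<and> nle A c v"
proof -
  have da: "ndirected A (partial_sums f I)" "a = nsup A (partial_sums f I)"
    using a isum_eq_Some_iff[of f I a] partial_sums_directed[of I f] by auto
  have db: "ndirected A (partial_sums g J)" "b = nsup A (partial_sums g J)"
    using b isum_eq_Some_iff[of g J b] partial_sums_directed[of J g] by auto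
  have "\<forall>x\<in>partial_sums f I. \<exists>c. padd A x b = Some c \<and> nle A c v"
  proof
    fix x assume "x \<in> partial_sums f I"
    then obtain F where F: "finite F" "F \<subseteq> I" "x = the (fsum A f F)"
      unfolding partial_sums_def by blast
    then obtain x' where x': "fsum A f F = Some x'"
      using a isum_eq_Some_iff by blast
    have "\<forall>y\<in>partial_sums g J. \<exists>c. padd A y x = Some c \<and> nle A c v"
    proof
      fix y assume "y \<in> partial_sums g J"
      then obtain G where G: "finite G" "G \<subseteq> J" "y = the (fsum A g G)"
        unfolding partial_sums_def by blast
      then obtain y' where y': "fsum A g G = Some y'"
        using b isum_eq_Some_iff by blast
      from bound[OF F(1,2) G(1,2) x' y'] show "\<exists>c. padd A y x = Some c \<and> nle A c v"
        using F(3) G(3) x' y' padd_commute by simp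
    qed
    from padd_nsup_le[OF db(1) this] show "\<exists>c. padd A x b = Some c \<and> nle A c v"
      using db(2) padd_commute by metis
  qed
  from padd_nsup_le[OF da(1) this] show ?thesis
    using da(2) by simp
qed

lemma padd_isum_Un_le:
  assumes dj: "I \<inter> J = {}"
    and a: "isum A f I = Some a" and b: "isum A f J = Some b" and u: "isum A f (I \<union> J) = Some u"
  shows "\<exists>c. padd A a b = Some c \<and> nle A c u"
proof (rule padd_isum_le[OF a b])
  fix F G x y
  assume FG: "finite F" "F \<subseteq> I" "finite G" "G \<subseteq> J" "fsum A f F = Some x" "fsum A f G = Some y"
  then have "fsum A f (F \<union> G) = padd A x y"
    using fsum_union[of F G f] dj by auto
  moreover have "finite (F \<union> G)" "F \<union> G \<subseteq> I \<union> J"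
    using FG by auto
  moreover from isum_fsum_le[OF u this] obtain z where "fsum A f (F \<union> G) = Some z" "nle A z u"
    by blast
  ultimately show "\<exists>c. padd A x y = Some c \<and> nle A c u"
    by metis
qed

lemma isum_Un_disjoint_Some:
  assumes dj: "I \<inter> J = {}"
    and a: "isum A f I = Some a" and b: "isum A f J = Some b" and c: "padd A a b = Some c"
  shows "isum A f (I \<union> J) = Some c"
proof -
  have "\<exists>u. isum A f (I \<union> J) = Some u \<and> nle A u c"
  proof (rule isum_exists_le)
    fix H assume H: "finite H" "H \<subseteq> I \<union> J"
    then have "H = (H \<inter> I) \<union> (H \<inter> J)"
      by auto
    then have split: "fsum A f H = Option.bind (fsum A f (H \<inter> I)) (\<lambda>a. Option.bind (fsum A f (H \<inter> J)) (padd A a))"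
      using fsum_union[of "H \<inter> I" "H \<inter> J" f] H dj by auto
    obtain x where x: "fsum A f (H \<inter> I) = Some x" "nle A x a"
      using isum_fsum_le[OF a] H by auto
    obtain y where y: "fsum A f (H \<inter> J) = Some y" "nle A y b"
      using isum_fsum_le[OF b] H by auto
    obtain c' where "padd A x y = Some c'" "nle A c' c"
      using padd_mono[OF x(2) y(2) c] by blast
    then show "\<exists>x. fsum A f H = Some x \<and> nle A x c"
      using split x y by simp
  qed
  then obtain u where u: "isum A f (I \<union> J) = Some u" "nle A u c"
    by blast
  then obtain c' where "padd A a b = Some c'" "nle A c' u"
    using padd_isum_Un_le[OF dj a b] by blast
  then show ?thesis
    using c u nle_antisym by simp
qed

lemma isum_Un_disjoint:
  assumes dj: "I \<inter> J = {}"
  shows "isum A f (I \<union> J) = Option.bind (isum A f I) (\<lambda>a. Option.bind (isum A f J) (padd A a))"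
proof (cases "isum A f (I \<union> J)")
  case (Some u)
  obtain a b where a: "isum A f I = Some a" and b: "isum A f J = Some b"
    using isum_subset_le[OF _ Some, of I] isum_subset_le[OF _ Some, of J] by auto
  then obtain c where "padd A a b = Some c"
    using padd_isum_Un_le[OF dj a b Some] by blast
  then show ?thesis
    using isum_Un_disjoint_Some[OF dj a b] a b by simp
next
  case None
  then show ?thesis
    using isum_Un_disjoint_Some[OF dj]
    by (cases "isum A f I"; cases "isum A f J"; cases "Option.bind (isum A f I) (\<lambda>a. Option.bind (isum A f J) (padd A a))") auto
qed

lemma isum_Sigma_finite:
  assumes "finite F" "\<And>i. i \<in> F \<Longrightarrow> isum A (f i) (J i) = Some (h i)"
  shows "isum A (\<lambda>(i, j). f i j) (Sigma F J) = fsum A h F"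
  using assms
proof (induction F rule: finite_induct)
  case (insert i F)
  have split: "Sigma (insert i F) J = Pair i ` J i \<union> Sigma F J"
    by auto
  have disjoint: "Pair i ` J i \<inter> Sigma F J = {}"
    using insert by auto
  have "isum A (\<lambda>(i, j). f i j) (Pair i ` J i) = Some (h i)"
    using isum_reindex[of "Pair i" "J i" "Pair i ` J i" "\<lambda>(i, j). f i j"] insert.prems
    by (simp add: bij_betw_def inj_on_def)
  moreover have "isum A (\<lambda>(i, j). f i j) (Sigma F J) = fsum A h F"
    using insert by auto
  ultimately show ?case
    unfolding split isum_Un_disjoint[OF disjoint] fsum_insert[OF insert.hyps]
    by (cases "fsum A h F") simp_all
qed simp

lemma isum_Sigma_le:
  assumes inner: "\<And>i. i \<in> I \<Longrightarrow> isum A (f i) (J i) = Some (h i)"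
    and v: "isum A h I = Some v"
  shows "\<exists>u. isum A (\<lambda>(i, j). f i j) (Sigma I J) = Some u \<and> nle A u v"
proof (rule isum_exists_le)
  fix G assume G: "finite G" "G \<subseteq> Sigma I J"
  then have F: "finite (fst ` G)" "fst ` G \<subseteq> I"
    by auto
  obtain y where y: "fsum A h (fst ` G) = Some y" "nle A y v"
    using isum_fsum_le[OF v F] by blast
  have S: "isum A (\<lambda>(i, j). f i j) (Sigma (fst ` G) J) = Some y"
    using isum_Sigma_finite[OF F(1), of f J h] inner F(2) y(1) by auto
  have "G \<subseteq> Sigma (fst ` G) J"
    using G by force
  then obtain x where "fsum A (\<lambda>(i, j). f i j) G = Some x" "nle A x y"
    using isum_fsum_le[OF S G(1)] by blast
  then show "\<exists>x. fsum A (\<lambda>(i, j). f i j) G = Some x \<and> nle A x v"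
    using y(2) nle_trans by blast
qed

lemma isum_le_Sigma:
  assumes inner: "\<And>i. i \<in> I \<Longrightarrow> isum A (f i) (J i) = Some (h i)"
    and u: "isum A (\<lambda>(i, j). f i j) (Sigma I J) = Some u"
  shows "\<exists>v. isum A h I = Some v \<and> nle A v u"
proof (rule isum_exists_le)
  fix F assume F: "finite F" "F \<subseteq> I"
  then have "Sigma F J \<subseteq> Sigma I J"
    by auto
  from isum_subset_le[OF this u]
  obtain x where "isum A (\<lambda>(i, j). f i j) (Sigma F J) = Some x" "nle A x u"
    by blast
  moreover have "isum A (\<lambda>(i, j). f i j) (Sigma F J) = fsum A h F"
    using isum_Sigma_finite[OF F(1), of f J h] inner F(2) by auto
  ultimately show "\<exists>x. fsum A h F = Some x \<and> nle A x u"
    by auto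
qed

lemma isum_Sigma:
  assumes inner: "\<And>i. i \<in> I \<Longrightarrow> isum A (f i) (J i) = Some (h i)"
  shows "isum A (\<lambda>(i, j). f i j) (Sigma I J) = isum A h I"
proof (cases "isum A h I")
  case (Some v)
  obtain u where u: "isum A (\<lambda>(i, j). f i j) (Sigma I J) = Some u" "nle A u v"
    using isum_Sigma_le[OF inner Some] by blast
  obtain v' where "isum A h I = Some v'" "nle A v' u"
    using isum_le_Sigma[OF inner u(1)] by blast
  then have "nle A v u"
    using Some by simp
  then show ?thesis
    using u Some nle_antisym by simp
next
  case None
  show ?thesis
  proof (cases "isum A (\<lambda>(i, j). f i j) (Sigma I J)")
    case (Some u)
    then show ?thesis
      using isum_le_Sigma[OF inner Some] None by simp
  qed (use None in simp)
qed

lemma isum_le_if_exhausted: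
  assumes exhaust: "\<And>F. finite F \<Longrightarrow> F \<subseteq> I \<Longrightarrow> \<exists>n. F \<subseteq> I' n"
    and bound: "\<And>n. \<exists>z. isum A f (I' n) = Some z \<and> nle A z v"
  shows "\<exists>u. isum A f I = Some u \<and> nle A u v"
proof (rule isum_exists_le)
  fix F assume "finite F" "F \<subseteq> I"
  then obtain n where "F \<subseteq> I' n"
    using exhaust by blast
  moreover obtain z where "isum A f (I' n) = Some z" "nle A z v"
    using bound by blast
  ultimately show "\<exists>x. fsum A f F = Some x \<and> nle A x v"
    using isum_fsum_le \<open>finite F\<close> nle_trans by blast
qed

lemma qle_refl [simp]: "qle A X X"
  unfolding qle_def by simp

lemma qle_trans: "qle A X Y \<Longrightarrow> qle A Y Z \<Longrightarrow> qle A X Z"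
  unfolding qle_def using nle_trans by blast

lemma qle_antisym: "qle A X Y \<Longrightarrow> qle A Y X \<Longrightarrow> X = Y"
  unfolding qle_def using nle_antisym by (simp add: fun_eq_iff)

lemma qadd_mono:
  assumes "qle A a a'" "qle A b b'" "qadd A a' b' = Some c'"
  shows "\<exists>c. qadd A a b = Some c \<and> qle A c c'"
proof -
  have "\<forall>\<sigma>. \<exists>c. padd A (a \<sigma>) (b \<sigma>) = Some c \<and> nle A c (c' \<sigma>)"
    using assms padd_mono unfolding qle_def qadd_def by (fastforce split: if_splits)
  then obtain c where "\<And>\<sigma>. padd A (a \<sigma>) (b \<sigma>) = Some (c \<sigma>) \<and> nle A (c \<sigma>) (c' \<sigma>)"
    by metis
  then show ?thesis
    unfolding qle_def qadd_def by auto
qed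

lemma plfp_eq_Some_iff:
  "plfp A \<Phi> = Some L \<longleftrightarrow> \<Phi> L = Some L \<and> (\<forall>Y. \<Phi> Y = Some Y \<longrightarrow> qle A L Y)"
proof -
  have "(THE X. \<Phi> X = Some X \<and> (\<forall>Y. \<Phi> Y = Some Y \<longrightarrow> qle A X Y)) = L'"
    if "\<Phi> L' = Some L' \<and> (\<forall>Y. \<Phi> Y = Some Y \<longrightarrow> qle A L' Y)" for L'
    using that qle_antisym by (blast intro: the_equality)
  then show ?thesis
    unfolding plfp_def by auto
qed

end

lemma qadd_eq_SomeD: "qadd A f h = Some s \<Longrightarrow> padd A (f \<sigma>) (h \<sigma>) = Some (s \<sigma>)"
  unfolding qadd_def by (auto split: if_splits)

lemma qsum_eq_SomeD: "qsum A F I = Some s \<Longrightarrow> isum A (\<lambda>i. F i \<sigma>) I = Some (s \<sigma>)"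
  unfolding qsum_def by (auto split: if_splits)

definition partial_mono :: "'u psr \<Rightarrow> (('v, 'u) quant \<Rightarrow> ('v, 'u) quant option) \<Rightarrow> bool" where
  "partial_mono A \<Phi> \<longleftrightarrow>
     (\<forall>X Y Y'. \<Phi> Y = Some Y' \<longrightarrow> qle A X Y \<longrightarrow> (\<exists>X'. \<Phi> X = Some X' \<and> qle A X' Y'))"

lemma partial_monoD:
  "partial_mono A \<Phi> \<Longrightarrow> \<Phi> Y = Some Y' \<Longrightarrow> qle A X Y \<Longrightarrow> \<exists>X'. \<Phi> X = Some X' \<and> qle A X' Y'"
  unfolding partial_mono_def by blast

context cpo_semiring
begin

lemma qsum_mono:
  assumes "\<And>i \<sigma>. nle A (F' i \<sigma>) (F i \<sigma>)" "qsum A F I = Some s"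
  shows "\<exists>s'. qsum A F' I = Some s' \<and> qle A s' s"
proof -
  have "\<exists>u. isum A (\<lambda>i. F' i \<sigma>) I = Some u \<and> nle A u (s \<sigma>)" for \<sigma>
    using isum_mono[OF _ qsum_eq_SomeD[OF assms(2)], of "\<lambda>i. F' i \<sigma>"] assms(1) by blast
  then have "\<forall>\<sigma>. \<exists>u. isum A (\<lambda>i. F' i \<sigma>) I = Some u \<and> nle A u (s \<sigma>)"
    by blast
  then obtain s' where "\<forall>\<sigma>. isum A (\<lambda>i. F' i \<sigma>) I = Some (s' \<sigma>) \<and> nle A (s' \<sigma>) (s \<sigma>)"
    by (metis choice)
  then show ?thesis
    unfolding qsum_def qle_def by auto
qed

lemma partial_mono_bind:
  assumes F: "partial_mono A F" and G: "partial_mono A G"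
  shows "partial_mono A (\<lambda>X. Option.bind (F X) G)"
  unfolding partial_mono_def
proof (intro allI impI)
  fix X Y Z assume "Option.bind (F Y) G = Some Z" and le: "qle A X Y"
  then obtain W where W: "F Y = Some W" "G W = Some Z"
    by (auto simp: bind_eq_Some_conv)
  then obtain W' where W': "F X = Some W'" "qle A W' W"
    using partial_monoD[OF F W(1) le] by blast
  then obtain Z' where "G W' = Some Z'" "qle A Z' Z"
    using partial_monoD[OF G W(2)] by blast
  then show "\<exists>X'. Option.bind (F X) G = Some X' \<and> qle A X' Z"
    using W'(1) by simp
qed

lemma partial_mono_qadd:
  assumes F: "partial_mono A F" and G: "partial_mono A G"
  shows "partial_mono A (\<lambda>X. Option.bind (F X) (\<lambda>a. Option.bind (G X) (qadd A a)))"
  unfolding partial_mono_def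
proof (intro allI impI)
  fix X Y Z
  assume "Option.bind (F Y) (\<lambda>a. Option.bind (G Y) (qadd A a)) = Some Z" and le: "qle A X Y"
  then obtain a b where ab: "F Y = Some a" "G Y = Some b" "qadd A a b = Some Z"
    by (auto simp: bind_eq_Some_conv)
  obtain a' where a': "F X = Some a'" "qle A a' a"
    using partial_monoD[OF F ab(1) le] by blast
  obtain b' where b': "G X = Some b'" "qle A b' b"
    using partial_monoD[OF G ab(2) le] by blast
  obtain c where "qadd A a' b' = Some c" "qle A c Z"
    using qadd_mono[OF a'(2) b'(2) ab(3)] by blast
  then show "\<exists>X'. Option.bind (F X) (\<lambda>a. Option.bind (G X) (qadd A a)) = Some X' \<and> qle A X' Z"
    using a'(1) b'(1) by simp
qed

end

section \<open>Least fixed points as limits of Kleene chains\<close>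

text \<open>\<open>approx n\<close> plays the role of the n-th Kleene iterate of \<open>\<Phi>\<close> from zero, and
  \<open>limit\<close> that of its supremum; both are given pointwise, as partial values.\<close>

locale kleene_chain = cpo_semiring A
  for A :: "'u psr" +
  fixes \<Phi> :: "('v, 'u) quant \<Rightarrow> ('v, 'u) quant option"
    and approx :: "nat \<Rightarrow> 'v state \<Rightarrow> 'u option"
    and limit :: "'v state \<Rightarrow> 'u option"
  assumes mono: "partial_mono A \<Phi>"
    and approx_0: "approx 0 \<tau> = Some (pzero A)"
    and approx_Suc: "(\<And>\<tau>. approx n \<tau> = Some (Z \<tau>)) \<Longrightarrow> \<Phi> Z = Some Z' \<Longrightarrow> approx (Suc n) \<tau> = Some (Z' \<tau>)"
    and limit_le: "(\<And>n. \<exists>z. approx n \<tau> = Some z \<and> nle A z v) \<Longrightarrow> \<exists>x. limit \<tau> = Some x \<and> nle A x v"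
    and limit_fixed: "(\<And>\<tau>. limit \<tau> = Some (X \<tau>)) \<Longrightarrow> \<Phi> X = Some X' \<Longrightarrow> X' = X"
begin

lemma approx_le_prefixed:
  assumes "\<Phi> Y = Some Y'" "qle A Y' Y"
  shows "\<exists>Z. (\<forall>\<tau>. approx n \<tau> = Some (Z \<tau>)) \<and> qle A Z Y"
proof (induction n)
  case 0
  show ?case
    using approx_0 by (intro exI[of _ "\<lambda>_. pzero A"]) (simp add: qle_def)
next
  case (Suc n)
  then obtain Z where Z: "\<And>\<tau>. approx n \<tau> = Some (Z \<tau>)" "qle A Z Y"
    by blast
  obtain Z' where "\<Phi> Z = Some Z'" "qle A Z' Y'"
    using partial_monoD[OF mono assms(1) Z(2)] by blast
  then show ?case
    using approx_Suc[OF Z(1)] qle_trans assms(2) by blast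
qed

lemma limit_le_prefixed:
  assumes "\<Phi> Y = Some Y'" "qle A Y' Y"
  shows "\<exists>X. (\<forall>\<tau>. limit \<tau> = Some (X \<tau>)) \<and> qle A X Y"
proof -
  have "\<forall>\<tau>. \<exists>x. limit \<tau> = Some x \<and> nle A x (Y \<tau>)"
    using limit_le approx_le_prefixed[OF assms] unfolding qle_def by metis
  then show ?thesis
    unfolding qle_def by metis
qed

theorem limit_is_plfp:
  assumes "\<Phi> Y = Some Y'" "qle A Y' Y"
  shows "\<exists>L. plfp A \<Phi> = Some L \<and> (\<forall>\<tau>. limit \<tau> = Some (L \<tau>)) \<and> qle A L Y"
proof -
  obtain X where X: "\<And>\<tau>. limit \<tau> = Some (X \<tau>)" "qle A X Y"
    using limit_le_prefixed[OF assms] by blast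
  obtain X' where "\<Phi> X = Some X'"
    using partial_monoD[OF mono assms(1) X(2)] by blast
  then have fixed: "\<Phi> X = Some X"
    using limit_fixed[OF X(1)] by simp
  have "qle A X Z" if Z: "\<Phi> Z = Some Z" for Z
  proof -
    obtain X'' where "\<And>\<tau>. limit \<tau> = Some (X'' \<tau>)" "qle A X'' Z"
      using limit_le_prefixed[OF Z qle_refl] by blast
    moreover from this have "X'' = X"
      using X(1) by (simp add: fun_eq_iff)
    ultimately show ?thesis
      by simp
  qed
  then have "plfp A \<Phi> = Some X"
    using fixed plfp_eq_Some_iff by blast
  then show ?thesis
    using X by blast
qed

corollary plfp_eq_limit:
  assumes "plfp A \<Phi> = Some L"
  shows "limit \<tau> = Some (L \<tau>)"
  using limit_is_plfp[of L L] assms by (auto simp: plfp_eq_Some_iff)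

end

section \<open>Trace semantics\<close>

text \<open>A trace records the nondeterministic choices of one run: the value chosen by a havoc,
  the branch of a choice, and the traces of the successive loop iterations.\<close>

datatype trace = TAssign | THavoc nat | TWeight | TSeq trace trace | TLeft trace | TRight trace
  | TIter "trace list"

primrec exec_iter ::
  "'u psr \<Rightarrow> (trace \<Rightarrow> 'v state \<Rightarrow> ('v state \<times> 'u) option) \<Rightarrow> ('v, 'u) quant \<Rightarrow>
    trace list \<Rightarrow> 'v state \<Rightarrow> ('v state \<times> 'u) option"
where
  "exec_iter A r e [] \<sigma> = Some (\<sigma>, pone A)"
| "exec_iter A r e (t # ts) \<sigma> = (case r t \<sigma> of None \<Rightarrow> None | Some (\<iota>, a) \<Rightarrow>
      (case exec_iter A r e ts \<iota> of None \<Rightarrow> None | Some (\<tau>, b) \<Rightarrow> Some (\<tau>, pmul A (pmul A (e \<sigma>) a) b)))"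

primrec exec :: "'u psr \<Rightarrow> ('v, 'u) prog \<Rightarrow> trace \<Rightarrow> 'v state \<Rightarrow> ('v state \<times> 'u) option" where
  "exec A (Assign x e) = (\<lambda>t \<sigma>. if t = TAssign then Some (\<sigma>(x := e \<sigma>), pone A) else None)"
| "exec A (Havoc x) = (\<lambda>t \<sigma>. case t of THavoc \<alpha> \<Rightarrow> Some (\<sigma>(x := \<alpha>), pone A) | _ \<Rightarrow> None)"
| "exec A (Weight w) = (\<lambda>t \<sigma>. if t = TWeight then Some (\<sigma>, w \<sigma>) else None)"
| "exec A (Seq C1 C2) = (\<lambda>t \<sigma>. case t of TSeq t1 t2 \<Rightarrow>
      (case exec A C1 t1 \<sigma> of None \<Rightarrow> None | Some (\<iota>, a) \<Rightarrow>
        (case exec A C2 t2 \<iota> of None \<Rightarrow> None | Some (\<tau>, b) \<Rightarrow> Some (\<tau>, pmul A a b))) | _ \<Rightarrow> None)"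
| "exec A (Choice C1 C2) =
     (\<lambda>t \<sigma>. case t of TLeft t1 \<Rightarrow> exec A C1 t1 \<sigma> | TRight t2 \<Rightarrow> exec A C2 t2 \<sigma> | _ \<Rightarrow> None)"
| "exec A (Iter C e e') = (\<lambda>t \<sigma>. case t of TIter ts \<Rightarrow>
      (case exec_iter A (exec A C) e ts \<sigma> of None \<Rightarrow> None | Some (\<tau>, b) \<Rightarrow> Some (\<tau>, pmul A b (e' \<tau>)))
    | _ \<Rightarrow> None)"

definition trace_ok :: "'u psr \<Rightarrow> ('v, 'u) prog \<Rightarrow> 'v state \<Rightarrow> trace \<Rightarrow> bool" where
  "trace_ok A C \<sigma> t \<longleftrightarrow> exec A C t \<sigma> \<noteq> None"

definition trace_end :: "'u psr \<Rightarrow> ('v, 'u) prog \<Rightarrow> 'v state \<Rightarrow> trace \<Rightarrow> 'v state" where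
  "trace_end A C \<sigma> t = fst (the (exec A C t \<sigma>))"

definition trace_wt :: "'u psr \<Rightarrow> ('v, 'u) prog \<Rightarrow> 'v state \<Rightarrow> trace \<Rightarrow> 'u" where
  "trace_wt A C \<sigma> t = snd (the (exec A C t \<sigma>))"

definition iter_ok :: "'u psr \<Rightarrow> ('v, 'u) prog \<Rightarrow> ('v, 'u) quant \<Rightarrow> 'v state \<Rightarrow> trace list \<Rightarrow> bool" where
  "iter_ok A C e \<sigma> ts \<longleftrightarrow> exec_iter A (exec A C) e ts \<sigma> \<noteq> None"

definition iter_end :: "'u psr \<Rightarrow> ('v, 'u) prog \<Rightarrow> ('v, 'u) quant \<Rightarrow> 'v state \<Rightarrow> trace list \<Rightarrow> 'v state" where
  "iter_end A C e \<sigma> ts = fst (the (exec_iter A (exec A C) e ts \<sigma>))"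

definition iter_wt :: "'u psr \<Rightarrow> ('v, 'u) prog \<Rightarrow> ('v, 'u) quant \<Rightarrow> 'v state \<Rightarrow> trace list \<Rightarrow> 'u" where
  "iter_wt A C e \<sigma> ts = snd (the (exec_iter A (exec A C) e ts \<sigma>))"

lemma exec_eq_SomeD:
  "exec A C t \<sigma> = Some (\<tau>, a) \<Longrightarrow> trace_ok A C \<sigma> t \<and> trace_end A C \<sigma> t = \<tau> \<and> trace_wt A C \<sigma> t = a"
  unfolding trace_ok_def trace_end_def trace_wt_def by auto

lemma trace_ok_Assign: "trace_ok A (Assign x e) \<sigma> t \<longleftrightarrow> t = TAssign"
  and trace_ok_Havoc: "trace_ok A (Havoc x) \<sigma> t \<longleftrightarrow> (\<exists>\<alpha>. t = THavoc \<alpha>)"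
  and trace_ok_Weight: "trace_ok A (Weight w) \<sigma> t \<longleftrightarrow> t = TWeight"
  unfolding trace_ok_def by (cases t; simp)+

lemma trace_ok_Seq:
  "trace_ok A (Seq C1 C2) \<sigma> t \<longleftrightarrow>
     (\<exists>t1 t2. t = TSeq t1 t2 \<and> trace_ok A C1 \<sigma> t1 \<and> trace_ok A C2 (trace_end A C1 \<sigma> t1) t2)"
  unfolding trace_ok_def trace_end_def by (cases t) (auto split: option.splits)

lemma trace_end_Seq:
  "trace_ok A C1 \<sigma> t1 \<Longrightarrow> trace_ok A C2 (trace_end A C1 \<sigma> t1) t2 \<Longrightarrow>
     trace_end A (Seq C1 C2) \<sigma> (TSeq t1 t2) = trace_end A C2 (trace_end A C1 \<sigma> t1) t2"
  unfolding trace_ok_def trace_end_def by (auto split: option.splits)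

lemma trace_wt_Seq:
  "trace_ok A C1 \<sigma> t1 \<Longrightarrow> trace_ok A C2 (trace_end A C1 \<sigma> t1) t2 \<Longrightarrow>
     trace_wt A (Seq C1 C2) \<sigma> (TSeq t1 t2) = pmul A (trace_wt A C1 \<sigma> t1) (trace_wt A C2 (trace_end A C1 \<sigma> t1) t2)"
  unfolding trace_ok_def trace_end_def trace_wt_def by (auto split: option.splits)

lemma trace_ok_Choice:
  "trace_ok A (Choice C1 C2) \<sigma> t \<longleftrightarrow>
     (\<exists>t1. t = TLeft t1 \<and> trace_ok A C1 \<sigma> t1) \<or> (\<exists>t2. t = TRight t2 \<and> trace_ok A C2 \<sigma> t2)"
  unfolding trace_ok_def by (cases t) auto

lemma trace_end_Choice [simp]:
  "trace_end A (Choice C1 C2) \<sigma> (TLeft t) = trace_end A C1 \<sigma> t"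
  "trace_end A (Choice C1 C2) \<sigma> (TRight t) = trace_end A C2 \<sigma> t"
  unfolding trace_end_def by auto

lemma trace_wt_Choice [simp]:
  "trace_wt A (Choice C1 C2) \<sigma> (TLeft t) = trace_wt A C1 \<sigma> t"
  "trace_wt A (Choice C1 C2) \<sigma> (TRight t) = trace_wt A C2 \<sigma> t"
  unfolding trace_wt_def by auto

lemma iter_ok_Nil [simp]: "iter_ok A C e \<sigma> []"
  and iter_end_Nil [simp]: "iter_end A C e \<sigma> [] = \<sigma>"
  and iter_wt_Nil [simp]: "iter_wt A C e \<sigma> [] = pone A"
  unfolding iter_ok_def iter_end_def iter_wt_def by auto

lemma exec_iter_Cons:
  "exec_iter A (exec A C) e (t # ts) \<sigma> =
    (if trace_ok A C \<sigma> t then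
       (case exec_iter A (exec A C) e ts (trace_end A C \<sigma> t) of None \<Rightarrow> None
         | Some (\<tau>, b) \<Rightarrow> Some (\<tau>, pmul A (pmul A (e \<sigma>) (trace_wt A C \<sigma> t)) b))
     else None)"
proof (cases "exec A C t \<sigma>")
  case (Some r)
  then obtain \<iota> a where "exec A C t \<sigma> = Some (\<iota>, a)"
    by (cases r) auto
  with exec_eq_SomeD[OF this] show ?thesis
    by (cases "exec_iter A (exec A C) e ts \<iota>") auto
qed (simp add: trace_ok_def)

lemma iter_ok_Cons:
  "iter_ok A C e \<sigma> (t # ts) \<longleftrightarrow> trace_ok A C \<sigma> t \<and> iter_ok A C e (trace_end A C \<sigma> t) ts"
  unfolding iter_ok_def exec_iter_Cons by (auto split: option.splits)

lemma iter_end_Cons: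
  "trace_ok A C \<sigma> t \<Longrightarrow> iter_ok A C e (trace_end A C \<sigma> t) ts \<Longrightarrow>
     iter_end A C e \<sigma> (t # ts) = iter_end A C e (trace_end A C \<sigma> t) ts"
  unfolding iter_ok_def iter_end_def exec_iter_Cons by (auto split: option.splits)

lemma iter_wt_Cons:
  "trace_ok A C \<sigma> t \<Longrightarrow> iter_ok A C e (trace_end A C \<sigma> t) ts \<Longrightarrow>
     iter_wt A C e \<sigma> (t # ts) = pmul A (pmul A (e \<sigma>) (trace_wt A C \<sigma> t)) (iter_wt A C e (trace_end A C \<sigma> t) ts)"
  unfolding iter_ok_def iter_end_def iter_wt_def exec_iter_Cons by (auto split: option.splits)

lemma trace_ok_Iter: "trace_ok A (Iter C e e') \<sigma> t \<longleftrightarrow> (\<exists>ts. t = TIter ts \<and> iter_ok A C e \<sigma> ts)"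
  unfolding trace_ok_def iter_ok_def by (cases t) (auto split: option.splits)

lemma trace_end_Iter: "iter_ok A C e \<sigma> ts \<Longrightarrow> trace_end A (Iter C e e') \<sigma> (TIter ts) = iter_end A C e \<sigma> ts"
  unfolding trace_end_def iter_ok_def iter_end_def by (auto split: option.splits)

lemma trace_wt_Iter:
  "iter_ok A C e \<sigma> ts \<Longrightarrow>
     trace_wt A (Iter C e e') \<sigma> (TIter ts) = pmul A (iter_wt A C e \<sigma> ts) (e' (iter_end A C e \<sigma> ts))"
  unfolding trace_wt_def iter_ok_def iter_end_def iter_wt_def by (auto split: option.splits)

context cpo_semiring
begin

lemma iter_snoc_all:
  "(iter_ok A C e \<sigma> (ts @ [t]) \<longleftrightarrow> iter_ok A C e \<sigma> ts \<and> trace_ok A C (iter_end A C e \<sigma> ts) t) \<and>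
   (iter_ok A C e \<sigma> ts \<longrightarrow> trace_ok A C (iter_end A C e \<sigma> ts) t \<longrightarrow>
      iter_end A C e \<sigma> (ts @ [t]) = trace_end A C (iter_end A C e \<sigma> ts) t \<and>
      iter_wt A C e \<sigma> (ts @ [t]) =
        pmul A (iter_wt A C e \<sigma> ts) (pmul A (e (iter_end A C e \<sigma> ts)) (trace_wt A C (iter_end A C e \<sigma> ts) t)))"
proof (induction ts arbitrary: \<sigma>)
  case Nil
  show ?case
    by (auto simp: iter_ok_Cons iter_end_Cons iter_wt_Cons)
next
  case (Cons t0 ts)
  show ?case
  proof (cases "trace_ok A C \<sigma> t0")
    case True
    then show ?thesis
      using Cons.IH[of "trace_end A C \<sigma> t0"]
      by (auto simp: iter_ok_Cons iter_end_Cons iter_wt_Cons pmul_assoc)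
  qed (simp add: iter_ok_Cons)
qed

lemma iter_ok_snoc:
  "iter_ok A C e \<sigma> (ts @ [t]) \<longleftrightarrow> iter_ok A C e \<sigma> ts \<and> trace_ok A C (iter_end A C e \<sigma> ts) t"
  using iter_snoc_all by blast

lemma iter_end_snoc:
  "iter_ok A C e \<sigma> ts \<Longrightarrow> trace_ok A C (iter_end A C e \<sigma> ts) t \<Longrightarrow>
     iter_end A C e \<sigma> (ts @ [t]) = trace_end A C (iter_end A C e \<sigma> ts) t"
  using iter_snoc_all by blast

lemma iter_wt_snoc:
  "iter_ok A C e \<sigma> ts \<Longrightarrow> trace_ok A C (iter_end A C e \<sigma> ts) t \<Longrightarrow>
     iter_wt A C e \<sigma> (ts @ [t]) =
       pmul A (iter_wt A C e \<sigma> ts) (pmul A (e (iter_end A C e \<sigma> ts)) (trace_wt A C (iter_end A C e \<sigma> ts) t))"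
  using iter_snoc_all by blast

end

section \<open>Strongest post as a sum over runs\<close>

definition paths_to :: "'u psr \<Rightarrow> ('v, 'u) prog \<Rightarrow> 'v state \<Rightarrow> ('v state \<times> trace) set" where
  "paths_to A C \<tau> = {(\<sigma>, t). trace_ok A C \<sigma> t \<and> trace_end A C \<sigma> t = \<tau>}"

definition sp_paths :: "'u psr \<Rightarrow> ('v, 'u) prog \<Rightarrow> ('v, 'u) quant \<Rightarrow> 'v state \<Rightarrow> 'u option" where
  "sp_paths A C \<mu> \<tau> = isum A (\<lambda>(\<sigma>, t). pmul A (\<mu> \<sigma>) (trace_wt A C \<sigma> t)) (paths_to A C \<tau>)"

definition sp_by_paths :: "'u psr \<Rightarrow> ('v, 'u) prog \<Rightarrow> bool" where
  "sp_by_paths A C \<longleftrightarrow> (\<forall>\<mu> s \<tau>. sp A C \<mu> = Some s \<longrightarrow> sp_paths A C \<mu> \<tau> = Some (s \<tau>))"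

lemma trace_end_simps [simp]:
  "trace_end A (Assign x e) \<sigma> TAssign = \<sigma>(x := e \<sigma>)"
  "trace_end A (Havoc x) \<sigma> (THavoc \<alpha>) = \<sigma>(x := \<alpha>)"
  "trace_end A (Weight w) \<sigma> TWeight = \<sigma>"
  unfolding trace_end_def by simp_all

lemma paths_to_Assign:
  "paths_to A (Assign x e) \<tau> = {(\<sigma>, TAssign) | \<sigma>. \<sigma>(x := e \<sigma>) = \<tau>}"
  unfolding paths_to_def trace_ok_Assign by auto

lemma paths_to_Havoc:
  "paths_to A (Havoc x) \<tau> = {(\<sigma>, THavoc \<alpha>) | \<sigma> \<alpha>. \<sigma>(x := \<alpha>) = \<tau>}"
  unfolding paths_to_def trace_ok_Havoc by auto

lemma paths_to_Weight: "paths_to A (Weight w) \<tau> = {(\<tau>, TWeight)}"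
  unfolding paths_to_def trace_ok_Weight by auto

lemma trace_wt_simps [simp]:
  "trace_wt A (Assign x e) \<sigma> TAssign = pone A"
  "trace_wt A (Havoc x) \<sigma> (THavoc \<alpha>) = pone A"
  "trace_wt A (Weight w) \<sigma> TWeight = w \<sigma>"
  unfolding trace_wt_def by simp_all

context cpo_semiring
begin

lemma sp_by_paths_Assign: "sp_by_paths A (Assign x e)"
  unfolding sp_by_paths_def
proof (intro allI impI)
  fix \<mu> s \<tau> assume "sp A (Assign x e) \<mu> = Some s"
  let ?F = "\<lambda>\<alpha>. pmul A (\<mu> (\<tau>(x := \<alpha>))) (iverson A (\<tau> x = e (\<tau>(x := \<alpha>))))"
  let ?S = "{\<alpha>. \<tau> x = e (\<tau>(x := \<alpha>))}"
  have "isum A ?F UNIV = Some (s \<tau>)"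
    using qsum_eq_SomeD \<open>sp A (Assign x e) \<mu> = Some s\<close> by fastforce
  moreover have "isum A ?F ?S = isum A ?F UNIV"
    by (rule isum_zero_extend) (auto simp: iverson_def)
  moreover have "bij_betw (\<lambda>\<alpha>. (\<tau>(x := \<alpha>), TAssign)) ?S (paths_to A (Assign x e) \<tau>)"
    by (rule bij_betw_byWitness[where f' = "\<lambda>(\<sigma>, t). \<sigma> x"]) (auto simp: paths_to_Assign fun_upd_idem_iff)
  then have "isum A ?F ?S = sp_paths A (Assign x e) \<mu> \<tau>"
    unfolding sp_paths_def by (rule isum_reindex_cong) (simp add: iverson_def)
  ultimately show "sp_paths A (Assign x e) \<mu> \<tau> = Some (s \<tau>)"
    by simp
qed

lemma sp_by_paths_Havoc: "sp_by_paths A (Havoc x)"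
  unfolding sp_by_paths_def
proof (intro allI impI)
  fix \<mu> s \<tau> assume "sp A (Havoc x) \<mu> = Some s"
  then have "isum A (\<lambda>\<alpha>. \<mu> (\<tau>(x := \<alpha>))) UNIV = Some (s \<tau>)"
    using qsum_eq_SomeD by fastforce
  moreover have "bij_betw (\<lambda>\<alpha>. (\<tau>(x := \<alpha>), THavoc (\<tau> x))) UNIV (paths_to A (Havoc x) \<tau>)"
    by (rule bij_betw_byWitness[where f' = "\<lambda>(\<sigma>, t). \<sigma> x"]) (auto simp: paths_to_Havoc)
  then have "isum A (\<lambda>\<alpha>. \<mu> (\<tau>(x := \<alpha>))) UNIV = sp_paths A (Havoc x) \<mu> \<tau>"
    unfolding sp_paths_def by (rule isum_reindex_cong) simp
  ultimately show "sp_paths A (Havoc x) \<mu> \<tau> = Some (s \<tau>)"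
    by simp
qed

lemma sp_by_paths_Weight: "sp_by_paths A (Weight w)"
  unfolding sp_by_paths_def sp_paths_def paths_to_Weight by simp

lemma sp_by_paths_Seq:
  assumes IH1: "sp_by_paths A C1" and IH2: "sp_by_paths A C2"
  shows "sp_by_paths A (Seq C1 C2)"
  unfolding sp_by_paths_def
proof (intro allI impI)
  fix \<mu> s \<tau> assume "sp A (Seq C1 C2) \<mu> = Some s"
  then obtain s1 where s1: "sp A C1 \<mu> = Some s1" "sp A C2 s1 = Some s"
    by (auto simp: bind_eq_Some_conv)
  let ?I = "Sigma (paths_to A C2 \<tau>) (\<lambda>(\<iota>, t2). paths_to A C1 \<iota>)"
  let ?f = "\<lambda>(\<iota>, t2) (\<sigma>, t1). pmul A (pmul A (\<mu> \<sigma>) (trace_wt A C1 \<sigma> t1)) (trace_wt A C2 \<iota> t2)"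
  have inner: "isum A (?f (\<iota>, t2)) (paths_to A C1 \<iota>) = Some (pmul A (s1 \<iota>) (trace_wt A C2 \<iota> t2))"
    for \<iota> t2
  proof -
    have "sp_paths A C1 \<mu> \<iota> = Some (s1 \<iota>)"
      using IH1 s1(1) unfolding sp_by_paths_def by blast
    from isum_pmul_right[OF this[unfolded sp_paths_def], of "trace_wt A C2 \<iota> t2"] show ?thesis
      by (simp add: case_prod_unfold)
  qed
  have "isum A (\<lambda>(q, p). ?f q p) ?I =
      isum A (\<lambda>(\<iota>, t2). pmul A (s1 \<iota>) (trace_wt A C2 \<iota> t2)) (paths_to A C2 \<tau>)"
    by (rule isum_Sigma) (use inner in auto)
  also have "\<dots> = Some (s \<tau>)"
    using IH2 s1(2) unfolding sp_by_paths_def sp_paths_def by simp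
  finally have "isum A (\<lambda>(q, p). ?f q p) ?I = Some (s \<tau>)" .
  moreover have "bij_betw (\<lambda>((\<iota>, t2), (\<sigma>, t1)). (\<sigma>, TSeq t1 t2)) ?I (paths_to A (Seq C1 C2) \<tau>)"
    by (rule bij_betw_byWitness[where f' = "\<lambda>(\<sigma>, t). case t of TSeq t1 t2 \<Rightarrow>
          ((trace_end A C1 \<sigma> t1, t2), (\<sigma>, t1))"])
      (auto simp: paths_to_def trace_ok_Seq trace_end_Seq)
  then have "isum A (\<lambda>(q, p). ?f q p) ?I = sp_paths A (Seq C1 C2) \<mu> \<tau>"
    unfolding sp_paths_def
    by (rule isum_reindex_cong) (auto simp: paths_to_def trace_wt_Seq pmul_assoc)
  ultimately show "sp_paths A (Seq C1 C2) \<mu> \<tau> = Some (s \<tau>)"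
    by simp
qed

lemma sp_by_paths_Choice:
  assumes IH1: "sp_by_paths A C1" and IH2: "sp_by_paths A C2"
  shows "sp_by_paths A (Choice C1 C2)"
  unfolding sp_by_paths_def
proof (intro allI impI)
  fix \<mu> s \<tau> assume "sp A (Choice C1 C2) \<mu> = Some s"
  then obtain s1 s2 where s12: "sp A C1 \<mu> = Some s1" "sp A C2 \<mu> = Some s2" "qadd A s1 s2 = Some s"
    by (auto simp: bind_eq_Some_conv)
  let ?f = "\<lambda>(\<sigma>, t). pmul A (\<mu> \<sigma>) (trace_wt A (Choice C1 C2) \<sigma> t)"
  let ?L = "{(\<sigma>, TLeft t) | \<sigma> t. (\<sigma>, t) \<in> paths_to A C1 \<tau>}"
  let ?R = "{(\<sigma>, TRight t) | \<sigma> t. (\<sigma>, t) \<in> paths_to A C2 \<tau>}"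
  have split: "paths_to A (Choice C1 C2) \<tau> = ?L \<union> ?R"
    unfolding paths_to_def by (auto simp: trace_ok_Choice)
  have disjoint: "?L \<inter> ?R = {}"
    by auto
  have "bij_betw (\<lambda>(\<sigma>, t). (\<sigma>, TLeft t)) (paths_to A C1 \<tau>) ?L"
    by (rule bij_betw_byWitness[where f' = "\<lambda>(\<sigma>, t). (\<sigma>, case t of TLeft t1 \<Rightarrow> t1)"]) auto
  then have "sp_paths A C1 \<mu> \<tau> = isum A ?f ?L"
    unfolding sp_paths_def by (rule isum_reindex_cong) (auto simp: case_prod_unfold)
  then have L: "isum A ?f ?L = Some (s1 \<tau>)"
    using IH1 s12(1) unfolding sp_by_paths_def by simp
  have "bij_betw (\<lambda>(\<sigma>, t). (\<sigma>, TRight t)) (paths_to A C2 \<tau>) ?R"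
    by (rule bij_betw_byWitness[where f' = "\<lambda>(\<sigma>, t). (\<sigma>, case t of TRight t2 \<Rightarrow> t2)"]) auto
  then have "sp_paths A C2 \<mu> \<tau> = isum A ?f ?R"
    unfolding sp_paths_def by (rule isum_reindex_cong) (auto simp: case_prod_unfold)
  then have R: "isum A ?f ?R = Some (s2 \<tau>)"
    using IH2 s12(2) unfolding sp_by_paths_def by simp
  show "sp_paths A (Choice C1 C2) \<mu> \<tau> = Some (s \<tau>)"
    unfolding sp_paths_def split isum_Un_disjoint[OF disjoint] L R
    using qadd_eq_SomeD[OF s12(3)] by simp
qed

lemma partial_mono_sp_Assign: "partial_mono A (sp A (Assign x e))"
  unfolding partial_mono_def qle_def
  by (auto intro!: qsum_mono[unfolded qle_def] pmul_right_mono)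

lemma partial_mono_sp_Havoc: "partial_mono A (sp A (Havoc x))"
  unfolding partial_mono_def qle_def
  by (auto intro!: qsum_mono[unfolded qle_def])

lemma partial_mono_sp_Weight: "partial_mono A (sp A (Weight w))"
  unfolding partial_mono_def qle_def by (auto intro: pmul_right_mono)

end

lemma shorter_lists_snoc:
  "{[]} \<union> {ts @ [t] | ts t. ts \<in> {ts. length ts < n}} = {ts. length ts < Suc n}"
proof (intro set_eqI iffI)
  fix xs :: "'a list" assume "xs \<in> {ts. length ts < Suc n}"
  then show "xs \<in> {[]} \<union> {ts @ [t] | ts t. ts \<in> {ts. length ts < n}}"
    by (cases xs rule: rev_exhaust) auto
qed auto

lemma all_lists_snoc: "{[]} \<union> {ts @ [t] | ts t. ts \<in> UNIV} = UNIV"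
  by (auto intro: rev_exhaust)

lemma finite_imp_length_bounded: "finite F \<Longrightarrow> \<exists>n. \<forall>x\<in>F. length (f x) < n"
  using finite_nat_set_iff_bounded[of "(\<lambda>x. length (f x)) ` F"] by auto

definition iter_paths_to ::
  "'u psr \<Rightarrow> ('v, 'u) prog \<Rightarrow> ('v, 'u) quant \<Rightarrow> trace list set \<Rightarrow> 'v state \<Rightarrow> ('v state \<times> trace list) set"
where
  "iter_paths_to A C e Q \<tau> = {(\<sigma>, ts). ts \<in> Q \<and> iter_ok A C e \<sigma> ts \<and> iter_end A C e \<sigma> ts = \<tau>}"

definition iter_sp_paths ::
  "'u psr \<Rightarrow> ('v, 'u) prog \<Rightarrow> ('v, 'u) quant \<Rightarrow> ('v, 'u) quant \<Rightarrow> trace list set \<Rightarrow> 'v state \<Rightarrow> 'u option"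
where
  "iter_sp_paths A C e \<mu> Q \<tau> =
     isum A (\<lambda>(\<sigma>, ts). pmul A (\<mu> \<sigma>) (iter_wt A C e \<sigma> ts)) (iter_paths_to A C e Q \<tau>)"

definition sp_iter_step ::
  "'u psr \<Rightarrow> ('v, 'u) prog \<Rightarrow> ('v, 'u) quant \<Rightarrow> ('v, 'u) quant \<Rightarrow> ('v, 'u) quant \<Rightarrow> ('v, 'u) quant option"
where
  "sp_iter_step A C e \<mu> X = Option.bind (sp A C (\<lambda>\<sigma>. pmul A (X \<sigma>) (e \<sigma>))) (qadd A \<mu>)"

lemma sp_Iter_eq:
  "sp A (Iter C e e') \<mu> = Option.bind (plfp A (sp_iter_step A C e \<mu>)) (\<lambda>L. Some (\<lambda>\<sigma>. pmul A (L \<sigma>) (e' \<sigma>)))"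
  unfolding sp_iter_step_def[abs_def] by simp

context cpo_semiring
begin

text \<open>Every nonempty run of the loop body sequence is a shorter run followed by one more
  run of the body, so extending the allowed traces by one iteration adds one application
  of \<open>sp C\<close> to the already collected weight.\<close>

lemma iter_sp_paths_snoc:
  assumes IH: "sp_by_paths A C"
    and Z: "\<And>\<iota>. iter_sp_paths A C e \<mu> Q \<iota> = Some (Z \<iota>)"
    and S: "sp A C (\<lambda>\<sigma>. pmul A (Z \<sigma>) (e \<sigma>)) = Some S"
  shows "iter_sp_paths A C e \<mu> ({[]} \<union> {ts @ [t] | ts t. ts \<in> Q}) \<tau> = padd A (\<mu> \<tau>) (S \<tau>)"
proof -
  let ?P = "iter_paths_to A C e ({[]} \<union> {ts @ [t] | ts t. ts \<in> Q}) \<tau>"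
  let ?f = "\<lambda>(\<sigma>, ts). pmul A (\<mu> \<sigma>) (iter_wt A C e \<sigma> ts)"
  let ?I = "Sigma (paths_to A C \<tau>) (\<lambda>(\<iota>, t). iter_paths_to A C e Q \<iota>)"
  let ?F = "\<lambda>(\<iota>, t) (\<sigma>, ts). pmul A (pmul A (pmul A (\<mu> \<sigma>) (iter_wt A C e \<sigma> ts)) (e \<iota>)) (trace_wt A C \<iota> t)"
  have inner: "isum A (?F (\<iota>, t)) (iter_paths_to A C e Q \<iota>) =
      Some (pmul A (pmul A (Z \<iota>) (e \<iota>)) (trace_wt A C \<iota> t))" for \<iota> t
  proof -
    note isum_pmul_right[OF Z[of \<iota>, unfolded iter_sp_paths_def], of "e \<iota>"]
    from isum_pmul_right[OF this, of "trace_wt A C \<iota> t"] show ?thesis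
      by (simp add: case_prod_unfold)
  qed
  have "isum A (\<lambda>(q, p). ?F q p) ?I =
      isum A (\<lambda>(\<iota>, t). pmul A (pmul A (Z \<iota>) (e \<iota>)) (trace_wt A C \<iota> t)) (paths_to A C \<tau>)"
    by (rule isum_Sigma) (use inner in auto)
  also have "\<dots> = Some (S \<tau>)"
    using IH S unfolding sp_by_paths_def sp_paths_def by simp
  finally have sigma: "isum A (\<lambda>(q, p). ?F q p) ?I = Some (S \<tau>)" .
  have "bij_betw (\<lambda>((\<iota>, t), (\<sigma>, ts)). (\<sigma>, ts @ [t])) ?I (?P - {(\<tau>, [])})"
    by (rule bij_betw_byWitness[where
          f' = "\<lambda>(\<sigma>, xs). ((iter_end A C e \<sigma> (butlast xs), last xs), (\<sigma>, butlast xs))"])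
      (auto simp: paths_to_def iter_paths_to_def iter_ok_snoc iter_end_snoc)
  then have "isum A (\<lambda>(q, p). ?F q p) ?I = isum A ?f (?P - {(\<tau>, [])})"
    by (rule isum_reindex_cong) (auto simp: paths_to_def iter_paths_to_def iter_wt_snoc pmul_assoc)
  then have rest: "isum A ?f (?P - {(\<tau>, [])}) = Some (S \<tau>)"
    using sigma by simp
  have "?P = {(\<tau>, [])} \<union> (?P - {(\<tau>, [])})"
    by (auto simp: iter_paths_to_def)
  then have "iter_sp_paths A C e \<mu> ({[]} \<union> {ts @ [t] | ts t. ts \<in> Q}) \<tau> =
      isum A ?f ({(\<tau>, [])} \<union> (?P - {(\<tau>, [])}))"
    unfolding iter_sp_paths_def by simp
  also have "\<dots> = padd A (\<mu> \<tau>) (S \<tau>)"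
    using isum_Un_disjoint[of "{(\<tau>, [])}" "?P - {(\<tau>, [])}" ?f] rest by simp
  finally show ?thesis .
qed

lemma kleene_chain_sp_iter:
  assumes IH: "sp_by_paths A C" and mono: "partial_mono A (sp A C)"
  shows "kleene_chain A (sp_iter_step A C e \<mu>)
           (\<lambda>n. iter_sp_paths A C e \<mu> {ts. length ts < n}) (iter_sp_paths A C e \<mu> UNIV)"
proof unfold_locales
  show "partial_mono A (sp_iter_step A C e \<mu>)"
    unfolding partial_mono_def
  proof (intro allI impI)
    fix X Y Y' assume "sp_iter_step A C e \<mu> Y = Some Y'" "qle A X Y"
    then obtain S where S: "sp A C (\<lambda>\<sigma>. pmul A (Y \<sigma>) (e \<sigma>)) = Some S" "qadd A \<mu> S = Some Y'"
      by (auto simp: sp_iter_step_def bind_eq_Some_conv)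
    have "qle A (\<lambda>\<sigma>. pmul A (X \<sigma>) (e \<sigma>)) (\<lambda>\<sigma>. pmul A (Y \<sigma>) (e \<sigma>))"
      using \<open>qle A X Y\<close> pmul_right_mono unfolding qle_def by blast
    then obtain S' where "sp A C (\<lambda>\<sigma>. pmul A (X \<sigma>) (e \<sigma>)) = Some S'" "qle A S' S"
      using partial_monoD[OF mono S(1)] by blast
    then show "\<exists>X'. sp_iter_step A C e \<mu> X = Some X' \<and> qle A X' Y'"
      using qadd_mono[OF qle_refl _ S(2)] by (simp add: sp_iter_step_def)
  qed
next
  show "iter_sp_paths A C e \<mu> {ts. length ts < 0} \<tau> = Some (pzero A)" for \<tau>
    by (simp add: iter_sp_paths_def iter_paths_to_def)
next
  fix n Z Z' \<tau>
  assume Z: "\<And>\<tau>. iter_sp_paths A C e \<mu> {ts. length ts < n} \<tau> = Some (Z \<tau>)"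
    and "sp_iter_step A C e \<mu> Z = Some Z'"
  then obtain S where "sp A C (\<lambda>\<sigma>. pmul A (Z \<sigma>) (e \<sigma>)) = Some S" "qadd A \<mu> S = Some Z'"
    by (auto simp: sp_iter_step_def bind_eq_Some_conv)
  then show "iter_sp_paths A C e \<mu> {ts. length ts < Suc n} \<tau> = Some (Z' \<tau>)"
    using iter_sp_paths_snoc[OF IH Z] qadd_eq_SomeD unfolding shorter_lists_snoc by metis
next
  fix \<tau> v
  assume "\<And>n. \<exists>z. iter_sp_paths A C e \<mu> {ts. length ts < n} \<tau> = Some z \<and> nle A z v"
  then show "\<exists>x. iter_sp_paths A C e \<mu> UNIV \<tau> = Some x \<and> nle A x v"
    unfolding iter_sp_paths_def
  proof (rule isum_le_if_exhausted[rotated])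
    fix F assume "finite F" "F \<subseteq> iter_paths_to A C e UNIV \<tau>"
    then show "\<exists>n. F \<subseteq> iter_paths_to A C e {ts. length ts < n} \<tau>"
      using finite_imp_length_bounded[of F snd] unfolding iter_paths_to_def by fastforce
  qed
next
  fix X X'
  assume X: "\<And>\<tau>. iter_sp_paths A C e \<mu> UNIV \<tau> = Some (X \<tau>)"
    and "sp_iter_step A C e \<mu> X = Some X'"
  then obtain S where S: "sp A C (\<lambda>\<sigma>. pmul A (X \<sigma>) (e \<sigma>)) = Some S" "qadd A \<mu> S = Some X'"
    by (auto simp: sp_iter_step_def bind_eq_Some_conv)
  have "Some (X \<tau>) = Some (X' \<tau>)" for \<tau>
    using iter_sp_paths_snoc[OF IH X S(1), of \<tau>] X[of \<tau>] qadd_eq_SomeD[OF S(2)]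
    unfolding all_lists_snoc by simp
  then show "X' = X"
    by auto
qed

lemma sp_by_paths_Iter:
  assumes IH: "sp_by_paths A C" and mono: "partial_mono A (sp A C)"
  shows "sp_by_paths A (Iter C e e')"
  unfolding sp_by_paths_def
proof (intro allI impI)
  fix \<mu> s \<tau> assume "sp A (Iter C e e') \<mu> = Some s"
  then obtain L where L: "plfp A (sp_iter_step A C e \<mu>) = Some L" "s = (\<lambda>\<sigma>. pmul A (L \<sigma>) (e' \<sigma>))"
    unfolding sp_Iter_eq by (auto simp: bind_eq_Some_conv)
  interpret kleene_chain A "sp_iter_step A C e \<mu>"
      "\<lambda>n. iter_sp_paths A C e \<mu> {ts. length ts < n}" "iter_sp_paths A C e \<mu> UNIV"
    by (rule kleene_chain_sp_iter[OF IH mono])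
  have "iter_sp_paths A C e \<mu> UNIV \<tau> = Some (L \<tau>)"
    using plfp_eq_limit[OF L(1)] .
  from isum_pmul_right[OF this[unfolded iter_sp_paths_def], of "e' \<tau>"]
  have "isum A (\<lambda>(\<sigma>, ts). pmul A (pmul A (\<mu> \<sigma>) (iter_wt A C e \<sigma> ts)) (e' \<tau>)) (iter_paths_to A C e UNIV \<tau>)
      = Some (s \<tau>)"
    using L(2) by (simp add: case_prod_unfold)
  moreover have "bij_betw (\<lambda>(\<sigma>, ts). (\<sigma>, TIter ts)) (iter_paths_to A C e UNIV \<tau>) (paths_to A (Iter C e e') \<tau>)"
    by (rule bij_betw_byWitness[where f' = "\<lambda>(\<sigma>, t). (\<sigma>, case t of TIter ts \<Rightarrow> ts)"])
      (auto simp: iter_paths_to_def paths_to_def trace_ok_Iter trace_end_Iter)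
  then have "isum A (\<lambda>(\<sigma>, ts). pmul A (pmul A (\<mu> \<sigma>) (iter_wt A C e \<sigma> ts)) (e' \<tau>)) (iter_paths_to A C e UNIV \<tau>)
      = sp_paths A (Iter C e e') \<mu> \<tau>"
    unfolding sp_paths_def
    by (rule isum_reindex_cong) (auto simp: iter_paths_to_def trace_wt_Iter pmul_assoc)
  ultimately show "sp_paths A (Iter C e e') \<mu> \<tau> = Some (s \<tau>)"
    by simp
qed

lemma partial_mono_sp_Iter:
  assumes IH: "sp_by_paths A C" and mono: "partial_mono A (sp A C)"
  shows "partial_mono A (sp A (Iter C e e'))"
  unfolding partial_mono_def
proof (intro allI impI)
  fix \<mu>' \<mu> s assume "sp A (Iter C e e') \<mu> = Some s" and le: "qle A \<mu>' \<mu>"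
  then obtain L where L: "plfp A (sp_iter_step A C e \<mu>) = Some L" "s = (\<lambda>\<sigma>. pmul A (L \<sigma>) (e' \<sigma>))"
    unfolding sp_Iter_eq by (auto simp: bind_eq_Some_conv)
  then obtain S where S: "sp A C (\<lambda>\<sigma>. pmul A (L \<sigma>) (e \<sigma>)) = Some S" "qadd A \<mu> S = Some L"
    unfolding plfp_eq_Some_iff sp_iter_step_def by (auto simp: bind_eq_Some_conv)
  interpret kleene_chain A "sp_iter_step A C e \<mu>'"
      "\<lambda>n. iter_sp_paths A C e \<mu>' {ts. length ts < n}" "iter_sp_paths A C e \<mu>' UNIV"
    by (rule kleene_chain_sp_iter[OF IH mono])
  txt \<open>\<open>L\<close> is a pre-fixed point of the step for the smaller initial weight \<open>\<mu>'\<close>.\<close>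
  obtain Y' where "qadd A \<mu>' S = Some Y'" "qle A Y' L"
    using qadd_mono[OF le qle_refl S(2)] by blast
  then have "sp_iter_step A C e \<mu>' L = Some Y'" "qle A Y' L"
    using S(1) by (simp_all add: sp_iter_step_def)
  then obtain L' where "plfp A (sp_iter_step A C e \<mu>') = Some L'" "qle A L' L"
    using limit_is_plfp by blast
  then show "\<exists>s'. sp A (Iter C e e') \<mu>' = Some s' \<and> qle A s' s"
    using L(2) pmul_right_mono unfolding sp_Iter_eq qle_def by auto
qed

theorem sp_by_paths_and_mono: "sp_by_paths A C \<and> partial_mono A (sp A C)"
proof (induction C)
  case (Assign x e)
  show ?case
    using sp_by_paths_Assign[of x e] partial_mono_sp_Assign[of x e] ..
next
  case (Havoc x)
  show ?case
    using sp_by_paths_Havoc[of x] partial_mono_sp_Havoc[of x] ..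
next
  case (Weight w)
  show ?case
    using sp_by_paths_Weight[of w] partial_mono_sp_Weight[of w] ..
next
  case (Seq C1 C2)
  then show ?case
    using partial_mono_bind[of "sp A C1" "sp A C2"] by (auto intro: sp_by_paths_Seq)
next
  case (Choice C1 C2)
  then show ?case
    using partial_mono_qadd[of "sp A C1" "sp A C2"] by (auto intro: sp_by_paths_Choice)
next
  case (Iter C e e')
  then show ?case
    using sp_by_paths_Iter[of C e e'] partial_mono_sp_Iter[of C e e'] by blast
qed

end

section \<open>Weakest pre as a sum over runs\<close>

definition traces_from :: "'u psr \<Rightarrow> ('v, 'u) prog \<Rightarrow> 'v state \<Rightarrow> trace set" where
  "traces_from A C \<sigma> = {t. trace_ok A C \<sigma> t}"

definition wp_paths :: "'u psr \<Rightarrow> ('v, 'u) prog \<Rightarrow> ('v, 'u) quant \<Rightarrow> 'v state \<Rightarrow> 'u option" where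
  "wp_paths A C g \<sigma> = isum A (\<lambda>t. pmul A (trace_wt A C \<sigma> t) (g (trace_end A C \<sigma> t))) (traces_from A C \<sigma>)"

definition wp_by_paths :: "'u psr \<Rightarrow> ('v, 'u) prog \<Rightarrow> bool" where
  "wp_by_paths A C \<longleftrightarrow> (\<forall>g w \<sigma>. wp A C g = Some w \<longrightarrow> wp_paths A C g \<sigma> = Some (w \<sigma>))"

lemma traces_from_Assign: "traces_from A (Assign x e) \<sigma> = {TAssign}"
  and traces_from_Havoc: "traces_from A (Havoc x) \<sigma> = range THavoc"
  and traces_from_Weight: "traces_from A (Weight w) \<sigma> = {TWeight}"
  unfolding traces_from_def trace_ok_Assign trace_ok_Havoc trace_ok_Weight by auto

context cpo_semiring
begin

lemma wp_by_paths_Assign: "wp_by_paths A (Assign x e)"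
  unfolding wp_by_paths_def wp_paths_def traces_from_Assign by simp

lemma wp_by_paths_Havoc: "wp_by_paths A (Havoc x)"
  unfolding wp_by_paths_def
proof (intro allI impI)
  fix g w \<sigma> assume "wp A (Havoc x) g = Some w"
  then have "isum A (\<lambda>\<alpha>. g (\<sigma>(x := \<alpha>))) UNIV = Some (w \<sigma>)"
    using qsum_eq_SomeD by fastforce
  moreover have "isum A (\<lambda>\<alpha>. g (\<sigma>(x := \<alpha>))) UNIV = wp_paths A (Havoc x) g \<sigma>"
    unfolding wp_paths_def traces_from_Havoc
    by (rule isum_reindex_cong[where h = THavoc]) (auto simp: bij_betw_def inj_on_def)
  ultimately show "wp_paths A (Havoc x) g \<sigma> = Some (w \<sigma>)"
    by simp
qed

lemma wp_by_paths_Weight: "wp_by_paths A (Weight w)"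
  unfolding wp_by_paths_def wp_paths_def traces_from_Weight by simp

lemma wp_by_paths_Seq:
  assumes IH1: "wp_by_paths A C1" and IH2: "wp_by_paths A C2"
  shows "wp_by_paths A (Seq C1 C2)"
  unfolding wp_by_paths_def
proof (intro allI impI)
  fix g w \<sigma> assume "wp A (Seq C1 C2) g = Some w"
  then obtain w2 where w2: "wp A C2 g = Some w2" "wp A C1 w2 = Some w"
    by (auto simp: bind_eq_Some_conv)
  let ?I = "Sigma (traces_from A C1 \<sigma>) (\<lambda>t1. traces_from A C2 (trace_end A C1 \<sigma> t1))"
  let ?f = "\<lambda>t1 t2. pmul A (trace_wt A C1 \<sigma> t1)
      (pmul A (trace_wt A C2 (trace_end A C1 \<sigma> t1) t2) (g (trace_end A C2 (trace_end A C1 \<sigma> t1) t2)))"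
  have "isum A (?f t1) (traces_from A C2 (trace_end A C1 \<sigma> t1)) =
      Some (pmul A (trace_wt A C1 \<sigma> t1) (w2 (trace_end A C1 \<sigma> t1)))" for t1
    using isum_pmul_left IH2 w2(1) unfolding wp_by_paths_def wp_paths_def by blast
  then have "isum A (\<lambda>(t1, t2). ?f t1 t2) ?I =
      isum A (\<lambda>t1. pmul A (trace_wt A C1 \<sigma> t1) (w2 (trace_end A C1 \<sigma> t1))) (traces_from A C1 \<sigma>)"
    by (rule isum_Sigma)
  also have "\<dots> = Some (w \<sigma>)"
    using IH1 w2(2) unfolding wp_by_paths_def wp_paths_def by simp
  finally have "isum A (\<lambda>(t1, t2). ?f t1 t2) ?I = Some (w \<sigma>)" .
  moreover have "bij_betw (\<lambda>(t1, t2). TSeq t1 t2) ?I (traces_from A (Seq C1 C2) \<sigma>)"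
    by (rule bij_betw_byWitness[where f' = "\<lambda>t. case t of TSeq t1 t2 \<Rightarrow> (t1, t2)"])
      (auto simp: traces_from_def trace_ok_Seq)
  then have "isum A (\<lambda>(t1, t2). ?f t1 t2) ?I = wp_paths A (Seq C1 C2) g \<sigma>"
    unfolding wp_paths_def
    by (rule isum_reindex_cong) (auto simp: traces_from_def trace_wt_Seq trace_end_Seq pmul_assoc)
  ultimately show "wp_paths A (Seq C1 C2) g \<sigma> = Some (w \<sigma>)"
    by simp
qed

lemma wp_by_paths_Choice:
  assumes IH1: "wp_by_paths A C1" and IH2: "wp_by_paths A C2"
  shows "wp_by_paths A (Choice C1 C2)"
  unfolding wp_by_paths_def
proof (intro allI impI)
  fix g w \<sigma> assume "wp A (Choice C1 C2) g = Some w"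
  then obtain w1 w2 where w12: "wp A C1 g = Some w1" "wp A C2 g = Some w2" "qadd A w1 w2 = Some w"
    by (auto simp: bind_eq_Some_conv)
  let ?f = "\<lambda>t. pmul A (trace_wt A (Choice C1 C2) \<sigma> t) (g (trace_end A (Choice C1 C2) \<sigma> t))"
  have split: "traces_from A (Choice C1 C2) \<sigma> = TLeft ` traces_from A C1 \<sigma> \<union> TRight ` traces_from A C2 \<sigma>"
    unfolding traces_from_def by (auto simp: trace_ok_Choice)
  have disjoint: "TLeft ` traces_from A C1 \<sigma> \<inter> TRight ` traces_from A C2 \<sigma> = {}"
    by auto
  have "wp_paths A C1 g \<sigma> = isum A ?f (TLeft ` traces_from A C1 \<sigma>)"
    unfolding wp_paths_def by (rule isum_reindex_cong[where h = TLeft]) (auto simp: bij_betw_def inj_on_def)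
  then have L: "isum A ?f (TLeft ` traces_from A C1 \<sigma>) = Some (w1 \<sigma>)"
    using IH1 w12(1) unfolding wp_by_paths_def by simp
  have "wp_paths A C2 g \<sigma> = isum A ?f (TRight ` traces_from A C2 \<sigma>)"
    unfolding wp_paths_def by (rule isum_reindex_cong[where h = TRight]) (auto simp: bij_betw_def inj_on_def)
  then have R: "isum A ?f (TRight ` traces_from A C2 \<sigma>) = Some (w2 \<sigma>)"
    using IH2 w12(2) unfolding wp_by_paths_def by simp
  show "wp_paths A (Choice C1 C2) g \<sigma> = Some (w \<sigma>)"
    unfolding wp_paths_def split isum_Un_disjoint[OF disjoint] L R
    using qadd_eq_SomeD[OF w12(3)] by simp
qed

lemma partial_mono_wp_Assign: "partial_mono A (wp A (Assign x e))"
  unfolding partial_mono_def qle_def by auto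

lemma partial_mono_wp_Havoc: "partial_mono A (wp A (Havoc x))"
  unfolding partial_mono_def qle_def
  by (auto intro!: qsum_mono[unfolded qle_def])

lemma partial_mono_wp_Weight: "partial_mono A (wp A (Weight w))"
  unfolding partial_mono_def qle_def by (auto intro: pmul_left_mono)

end

lemma shorter_lists_Cons:
  "{[]} \<union> {t # ts | t ts. ts \<in> {ts. length ts < n}} = {ts. length ts < Suc n}"
proof (intro set_eqI iffI)
  fix xs :: "'a list" assume "xs \<in> {ts. length ts < Suc n}"
  then show "xs \<in> {[]} \<union> {t # ts | t ts. ts \<in> {ts. length ts < n}}"
    by (cases xs) auto
qed auto

lemma all_lists_Cons: "{[]} \<union> {t # ts | t ts. ts \<in> UNIV} = UNIV"
  by (auto intro: list.exhaust)

definition iter_traces_from ::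
  "'u psr \<Rightarrow> ('v, 'u) prog \<Rightarrow> ('v, 'u) quant \<Rightarrow> trace list set \<Rightarrow> 'v state \<Rightarrow> trace list set"
where
  "iter_traces_from A C e Q \<sigma> = {ts \<in> Q. iter_ok A C e \<sigma> ts}"

definition iter_wp_paths ::
  "'u psr \<Rightarrow> ('v, 'u) prog \<Rightarrow> ('v, 'u) quant \<Rightarrow> ('v, 'u) quant \<Rightarrow> trace list set \<Rightarrow> 'v state \<Rightarrow> 'u option"
where
  "iter_wp_paths A C e h Q \<sigma> =
     isum A (\<lambda>ts. pmul A (iter_wt A C e \<sigma> ts) (h (iter_end A C e \<sigma> ts))) (iter_traces_from A C e Q \<sigma>)"

definition wp_iter_step ::
  "'u psr \<Rightarrow> ('v, 'u) prog \<Rightarrow> ('v, 'u) quant \<Rightarrow> ('v, 'u) quant \<Rightarrow> ('v, 'u) quant \<Rightarrow> ('v, 'u) quant option"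
where
  "wp_iter_step A C e h X = Option.bind (wp A C X) (\<lambda>Y. qadd A h (\<lambda>\<sigma>. pmul A (e \<sigma>) (Y \<sigma>)))"

lemma wp_Iter_eq: "wp A (Iter C e e') g = plfp A (wp_iter_step A C e (\<lambda>\<sigma>. pmul A (e' \<sigma>) (g \<sigma>)))"
  unfolding wp_iter_step_def[abs_def] by simp

context cpo_semiring
begin

lemma iter_wp_paths_Cons:
  assumes IH: "wp_by_paths A C"
    and Z: "\<And>\<iota>. iter_wp_paths A C e h Q \<iota> = Some (Z \<iota>)"
    and S: "wp A C Z = Some S"
  shows "iter_wp_paths A C e h ({[]} \<union> {t # ts | t ts. ts \<in> Q}) \<sigma> = padd A (h \<sigma>) (pmul A (e \<sigma>) (S \<sigma>))"
proof -
  let ?J = "iter_traces_from A C e ({[]} \<union> {t # ts | t ts. ts \<in> Q}) \<sigma>"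
  let ?f = "\<lambda>ts. pmul A (iter_wt A C e \<sigma> ts) (h (iter_end A C e \<sigma> ts))"
  let ?I = "Sigma (traces_from A C \<sigma>) (\<lambda>t. iter_traces_from A C e Q (trace_end A C \<sigma> t))"
  let ?F = "\<lambda>t ts. pmul A (e \<sigma>) (pmul A (trace_wt A C \<sigma> t)
      (pmul A (iter_wt A C e (trace_end A C \<sigma> t) ts) (h (iter_end A C e (trace_end A C \<sigma> t) ts))))"
  have "isum A (?F t) (iter_traces_from A C e Q (trace_end A C \<sigma> t)) =
      Some (pmul A (e \<sigma>) (pmul A (trace_wt A C \<sigma> t) (Z (trace_end A C \<sigma> t))))" for t
    using isum_pmul_left[OF isum_pmul_left[OF Z[unfolded iter_wp_paths_def]]] by blast
  then have "isum A (\<lambda>(t, ts). ?F t ts) ?I =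
      isum A (\<lambda>t. pmul A (e \<sigma>) (pmul A (trace_wt A C \<sigma> t) (Z (trace_end A C \<sigma> t)))) (traces_from A C \<sigma>)"
    by (rule isum_Sigma)
  also have "\<dots> = Some (pmul A (e \<sigma>) (S \<sigma>))"
    using isum_pmul_left IH S unfolding wp_by_paths_def wp_paths_def by blast
  finally have sigma: "isum A (\<lambda>(t, ts). ?F t ts) ?I = Some (pmul A (e \<sigma>) (S \<sigma>))" .
  have "bij_betw (\<lambda>(t, ts). t # ts) ?I (?J - {[]})"
    by (rule bij_betw_byWitness[where f' = "\<lambda>xs. (hd xs, tl xs)"])
      (auto simp: traces_from_def iter_traces_from_def iter_ok_Cons neq_Nil_conv)
  then have "isum A (\<lambda>(t, ts). ?F t ts) ?I = isum A ?f (?J - {[]})"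
    by (rule isum_reindex_cong)
      (auto simp: traces_from_def iter_traces_from_def iter_wt_Cons iter_end_Cons pmul_assoc)
  then have rest: "isum A ?f (?J - {[]}) = Some (pmul A (e \<sigma>) (S \<sigma>))"
    using sigma by simp
  have "?J = {[]} \<union> (?J - {[]})"
    by (auto simp: iter_traces_from_def)
  then have "iter_wp_paths A C e h ({[]} \<union> {t # ts | t ts. ts \<in> Q}) \<sigma> = isum A ?f ({[]} \<union> (?J - {[]}))"
    unfolding iter_wp_paths_def by simp
  also have "\<dots> = padd A (h \<sigma>) (pmul A (e \<sigma>) (S \<sigma>))"
    using isum_Un_disjoint[of "{[]}" "?J - {[]}" ?f] rest by simp
  finally show ?thesis .
qed

lemma kleene_chain_wp_iter:
  assumes IH: "wp_by_paths A C" and mono: "partial_mono A (wp A C)"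
  shows "kleene_chain A (wp_iter_step A C e h)
           (\<lambda>n. iter_wp_paths A C e h {ts. length ts < n}) (iter_wp_paths A C e h UNIV)"
proof unfold_locales
  show "partial_mono A (wp_iter_step A C e h)"
    unfolding partial_mono_def
  proof (intro allI impI)
    fix X Y Y' assume "wp_iter_step A C e h Y = Some Y'" "qle A X Y"
    then obtain S where S: "wp A C Y = Some S" "qadd A h (\<lambda>\<sigma>. pmul A (e \<sigma>) (S \<sigma>)) = Some Y'"
      by (auto simp: wp_iter_step_def bind_eq_Some_conv)
    obtain S' where S': "wp A C X = Some S'" "qle A S' S"
      using partial_monoD[OF mono S(1) \<open>qle A X Y\<close>] by blast
    then have "qle A (\<lambda>\<sigma>. pmul A (e \<sigma>) (S' \<sigma>)) (\<lambda>\<sigma>. pmul A (e \<sigma>) (S \<sigma>))"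
      using pmul_left_mono unfolding qle_def by blast
    then show "\<exists>X'. wp_iter_step A C e h X = Some X' \<and> qle A X' Y'"
      using qadd_mono[OF qle_refl _ S(2)] S'(1) by (simp add: wp_iter_step_def)
  qed
next
  show "iter_wp_paths A C e h {ts. length ts < 0} \<sigma> = Some (pzero A)" for \<sigma>
    by (simp add: iter_wp_paths_def iter_traces_from_def)
next
  fix n Z Z' \<sigma>
  assume Z: "\<And>\<sigma>. iter_wp_paths A C e h {ts. length ts < n} \<sigma> = Some (Z \<sigma>)"
    and "wp_iter_step A C e h Z = Some Z'"
  then obtain S where "wp A C Z = Some S" "qadd A h (\<lambda>\<sigma>. pmul A (e \<sigma>) (S \<sigma>)) = Some Z'"
    by (auto simp: wp_iter_step_def bind_eq_Some_conv)
  then show "iter_wp_paths A C e h {ts. length ts < Suc n} \<sigma> = Some (Z' \<sigma>)"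
    using iter_wp_paths_Cons[OF IH Z] qadd_eq_SomeD unfolding shorter_lists_Cons by metis
next
  fix \<sigma> v
  assume "\<And>n. \<exists>z. iter_wp_paths A C e h {ts. length ts < n} \<sigma> = Some z \<and> nle A z v"
  then show "\<exists>x. iter_wp_paths A C e h UNIV \<sigma> = Some x \<and> nle A x v"
    unfolding iter_wp_paths_def
  proof (rule isum_le_if_exhausted[rotated])
    fix F assume "finite F" "F \<subseteq> iter_traces_from A C e UNIV \<sigma>"
    then show "\<exists>n. F \<subseteq> iter_traces_from A C e {ts. length ts < n} \<sigma>"
      using finite_imp_length_bounded[of F id] unfolding iter_traces_from_def by auto
  qed
next
  fix X X'
  assume X: "\<And>\<sigma>. iter_wp_paths A C e h UNIV \<sigma> = Some (X \<sigma>)"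
    and "wp_iter_step A C e h X = Some X'"
  then obtain S where S: "wp A C X = Some S" "qadd A h (\<lambda>\<sigma>. pmul A (e \<sigma>) (S \<sigma>)) = Some X'"
    by (auto simp: wp_iter_step_def bind_eq_Some_conv)
  have "Some (X \<sigma>) = Some (X' \<sigma>)" for \<sigma>
    using iter_wp_paths_Cons[OF IH X S(1), of \<sigma>] X[of \<sigma>] qadd_eq_SomeD[OF S(2)]
    unfolding all_lists_Cons by simp
  then show "X' = X"
    by auto
qed

lemma wp_by_paths_Iter:
  assumes IH: "wp_by_paths A C" and mono: "partial_mono A (wp A C)"
  shows "wp_by_paths A (Iter C e e')"
  unfolding wp_by_paths_def
proof (intro allI impI)
  fix g w \<sigma> assume "wp A (Iter C e e') g = Some w"
  then have L: "plfp A (wp_iter_step A C e (\<lambda>\<sigma>. pmul A (e' \<sigma>) (g \<sigma>))) = Some w"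
    unfolding wp_Iter_eq .
  interpret kleene_chain A "wp_iter_step A C e (\<lambda>\<sigma>. pmul A (e' \<sigma>) (g \<sigma>))"
      "\<lambda>n. iter_wp_paths A C e (\<lambda>\<sigma>. pmul A (e' \<sigma>) (g \<sigma>)) {ts. length ts < n}"
      "iter_wp_paths A C e (\<lambda>\<sigma>. pmul A (e' \<sigma>) (g \<sigma>)) UNIV"
    by (rule kleene_chain_wp_iter[OF IH mono])
  have "iter_wp_paths A C e (\<lambda>\<sigma>. pmul A (e' \<sigma>) (g \<sigma>)) UNIV \<sigma> = Some (w \<sigma>)"
    using plfp_eq_limit[OF L] .
  moreover have "bij_betw TIter (iter_traces_from A C e UNIV \<sigma>) (traces_from A (Iter C e e') \<sigma>)"
    by (rule bij_betw_byWitness[where f' = "\<lambda>t. case t of TIter ts \<Rightarrow> ts"])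
      (auto simp: iter_traces_from_def traces_from_def trace_ok_Iter)
  then have "iter_wp_paths A C e (\<lambda>\<sigma>. pmul A (e' \<sigma>) (g \<sigma>)) UNIV \<sigma> = wp_paths A (Iter C e e') g \<sigma>"
    unfolding iter_wp_paths_def wp_paths_def
    by (rule isum_reindex_cong) (auto simp: iter_traces_from_def trace_wt_Iter trace_end_Iter pmul_assoc)
  ultimately show "wp_paths A (Iter C e e') g \<sigma> = Some (w \<sigma>)"
    by simp
qed

lemma partial_mono_wp_Iter:
  assumes IH: "wp_by_paths A C" and mono: "partial_mono A (wp A C)"
  shows "partial_mono A (wp A (Iter C e e'))"
  unfolding partial_mono_def
proof (intro allI impI)
  fix g' g w assume w: "wp A (Iter C e e') g = Some w" and le: "qle A g' g"
  from w have "plfp A (wp_iter_step A C e (\<lambda>\<sigma>. pmul A (e' \<sigma>) (g \<sigma>))) = Some w"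
    unfolding wp_Iter_eq .
  then obtain S where S: "wp A C w = Some S" "qadd A (\<lambda>\<sigma>. pmul A (e' \<sigma>) (g \<sigma>)) (\<lambda>\<sigma>. pmul A (e \<sigma>) (S \<sigma>)) = Some w"
    unfolding plfp_eq_Some_iff wp_iter_step_def by (auto simp: bind_eq_Some_conv)
  interpret kleene_chain A "wp_iter_step A C e (\<lambda>\<sigma>. pmul A (e' \<sigma>) (g' \<sigma>))"
      "\<lambda>n. iter_wp_paths A C e (\<lambda>\<sigma>. pmul A (e' \<sigma>) (g' \<sigma>)) {ts. length ts < n}"
      "iter_wp_paths A C e (\<lambda>\<sigma>. pmul A (e' \<sigma>) (g' \<sigma>)) UNIV"
    by (rule kleene_chain_wp_iter[OF IH mono])
  txt \<open>\<open>w\<close> is a pre-fixed point of the step for the smaller postcondition \<open>g'\<close>.\<close>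
  have "qle A (\<lambda>\<sigma>. pmul A (e' \<sigma>) (g' \<sigma>)) (\<lambda>\<sigma>. pmul A (e' \<sigma>) (g \<sigma>))"
    using le pmul_left_mono unfolding qle_def by blast
  then obtain Y' where "qadd A (\<lambda>\<sigma>. pmul A (e' \<sigma>) (g' \<sigma>)) (\<lambda>\<sigma>. pmul A (e \<sigma>) (S \<sigma>)) = Some Y'" "qle A Y' w"
    using qadd_mono[OF _ qle_refl S(2)] by blast
  then have "wp_iter_step A C e (\<lambda>\<sigma>. pmul A (e' \<sigma>) (g' \<sigma>)) w = Some Y'" "qle A Y' w"
    using S(1) by (simp_all add: wp_iter_step_def)
  then show "\<exists>w'. wp A (Iter C e e') g' = Some w' \<and> qle A w' w"
    unfolding wp_Iter_eq using limit_is_plfp by blast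
qed

theorem wp_by_paths_and_mono: "wp_by_paths A C \<and> partial_mono A (wp A C)"
proof (induction C)
  case (Assign x e)
  show ?case
    using wp_by_paths_Assign[of x e] partial_mono_wp_Assign[of x e] ..
next
  case (Havoc x)
  show ?case
    using wp_by_paths_Havoc[of x] partial_mono_wp_Havoc[of x] ..
next
  case (Weight w)
  show ?case
    using wp_by_paths_Weight[of w] partial_mono_wp_Weight[of w] ..
next
  case (Seq C1 C2)
  then show ?case
    using partial_mono_bind[of "wp A C2" "wp A C1"] by (auto intro: wp_by_paths_Seq)
next
  case (Choice C1 C2)
  then show ?case
    using partial_mono_qadd[of "wp A C1" "wp A C2"] by (auto intro: wp_by_paths_Choice)
next
  case (Iter C e e')
  then show ?case
    using wp_by_paths_Iter[of C e e'] partial_mono_wp_Iter[of C e e'] by blast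
qed

end

section \<open>Duality\<close>

theorem (in cpo_semiring) sp_wp_duality:
  assumes sp: "sp A C \<mu> = Some s" and wp: "wp A C g = Some w"
  shows "isum A (\<lambda>\<tau>. pmul A (s \<tau>) (g \<tau>)) UNIV = isum A (\<lambda>\<sigma>. pmul A (\<mu> \<sigma>) (w \<sigma>)) UNIV"
proof -
  let ?F = "\<lambda>\<tau> (\<sigma>, t). pmul A (pmul A (\<mu> \<sigma>) (trace_wt A C \<sigma> t)) (g \<tau>)"
  let ?H = "\<lambda>\<sigma> t. pmul A (\<mu> \<sigma>) (pmul A (trace_wt A C \<sigma> t) (g (trace_end A C \<sigma> t)))"
  have post: "isum A (?F \<tau>) (paths_to A C \<tau>) = Some (pmul A (s \<tau>) (g \<tau>))" for \<tau>
  proof -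
    have "sp_paths A C \<mu> \<tau> = Some (s \<tau>)"
      using sp_by_paths_and_mono sp unfolding sp_by_paths_def by blast
    from isum_pmul_right[OF this[unfolded sp_paths_def], of "g \<tau>"] show ?thesis
      by (simp add: case_prod_unfold)
  qed
  have pre: "isum A (?H \<sigma>) (traces_from A C \<sigma>) = Some (pmul A (\<mu> \<sigma>) (w \<sigma>))" for \<sigma>
  proof -
    have "wp_paths A C g \<sigma> = Some (w \<sigma>)"
      using wp_by_paths_and_mono wp unfolding wp_by_paths_def by blast
    from isum_pmul_left[OF this[unfolded wp_paths_def], of "\<mu> \<sigma>"] show ?thesis .
  qed
  have "bij_betw snd (Sigma UNIV (paths_to A C)) (Sigma UNIV (traces_from A C))"
    by (rule bij_betw_byWitness[where f' = "\<lambda>(\<sigma>, t). (trace_end A C \<sigma> t, (\<sigma>, t))"])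
      (auto simp: paths_to_def traces_from_def)
  then have "isum A (\<lambda>(\<tau>, p). ?F \<tau> p) (Sigma UNIV (paths_to A C)) =
      isum A (\<lambda>(\<sigma>, t). ?H \<sigma> t) (Sigma UNIV (traces_from A C))"
    by (rule isum_reindex_cong) (auto simp: paths_to_def pmul_assoc)
  then show ?thesis
    using isum_Sigma[of UNIV ?F] isum_Sigma[of UNIV ?H] post pre by simp
qed

theorem mainTheorem3:
  fixes A :: "'u psr"
    and C :: "('v::finite, 'u) prog"
    and \<mu> g s w :: "('v, 'u) quant"
    and l r :: 'u
  assumes "partial_semiring A"
    and "sp A C \<mu> = Some s"
    and "wp A C g = Some w"
    and "isum A (\<lambda>\<tau>. pmul A (s \<tau>) (g \<tau>)) UNIV = Some l"
    and "isum A (\<lambda>\<sigma>. pmul A (\<mu> \<sigma>) (w \<sigma>)) UNIV = Some r"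
  shows "l = r"
proof -
  interpret cpo_semiring A
    using assms(1) by (rule cpo_semiring_if_partial_semiring)
  show ?thesis
    using sp_wp_duality[OF assms(2,3)] assms(4,5) by simp
qed

end
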